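(* Let $G \ne K_4$ be a connected, claw-free, cubic graph with $u(G)$ units. Then $\sigma_{(2,3)}(G) = u(G)+1$ if $G$ is a diamond-necklace $N_k$ for some $k\ge 2$, and $\sigma_{(2,3)}(G) = u(G)$ otherwise.
   Context: A graph is claw-free if it has no induced subgraph isomorphic to $K_{1,3}$; it is cubic if every vertex has degree $3$. A diamond is an induced subgraph isomorphic to $K_4$ minus one edge. For a connected, claw-free, cubic graph $G\neq K_4$, the vertex set $V(G)$ can be uniquely partitioned into sets each of which induces a triangle or a diamond in $G$; the parts are called units, and $u(G)$ is the number of units. Diamond-necklace: for $k\ge 2$, take $k$ disjoint diamonds $D_1,\dots,D_k$ with $V(D_i)=\{a_i,b_i,c_i,d_i\}$ where $a_ib_i$ is the missing edge, and add the edges $a_ib_{i+1}$ for $i\in\{1,\dots,k-1\}$ and the edge $a_kb_1$; the result is $N_k$. $(p,q)$-spreading: let $p\in\mathbb{N}$ and $q\in\mathbb{N}\cup\{\infty\}$. Start with a set $S\subseteq V(G)$ of blue vertices, all other vertices white. The color change rule: if a white vertex $w$ has at least $p$ blue neighbors, and at least one of the blue neighbors of $w$ has at most $q$ white neighbors, then $w$ is recolored blue. $S$ is a $(p,q)$-spreading set if repeatedly applying this rule eventually colors all vertices blue. $\sigma_{(p,q)}(G)$ is the minimum cardinality of a $(p,q)$-spreading set of $G$. *)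

theory Defs
  imports Main "HOL-Library.Extended_Nat"
begin

definition simple_graph :: "'a set \<Rightarrow> ('a \<Rightarrow> 'a \<Rightarrow> bool) \<Rightarrow> bool" where
  "simple_graph V E \<longleftrightarrow> finite V \<and> (\<forall>x y. E x y \<longrightarrow> x \<in> V \<and> y \<in> V)
     \<and> (\<forall>x y. E x y \<longrightarrow> E y x) \<and> (\<forall>x. \<not> E x x)"

definition nbrs :: "('a \<Rightarrow> 'a \<Rightarrow> bool) \<Rightarrow> 'a \<Rightarrow> 'a set" where
  "nbrs E x = {y. E x y}"

definition cubic :: "'a set \<Rightarrow> ('a \<Rightarrow> 'a \<Rightarrow> bool) \<Rightarrow> bool" where
  "cubic V E \<longleftrightarrow> (\<forall>v\<in>V. card (nbrs E v) = 3)"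

definition connected_graph :: "'a set \<Rightarrow> ('a \<Rightarrow> 'a \<Rightarrow> bool) \<Rightarrow> bool" where
  "connected_graph V E \<longleftrightarrow> V \<noteq> {} \<and> (\<forall>x\<in>V. \<forall>y\<in>V. E\<^sup>*\<^sup>* x y)"

definition claw_free :: "'a set \<Rightarrow> ('a \<Rightarrow> 'a \<Rightarrow> bool) \<Rightarrow> bool" where
  "claw_free V E \<longleftrightarrow> \<not> (\<exists>v\<in>V. \<exists>a b c. E v a \<and> E v b \<and> E v c \<and> a \<noteq> b \<and> a \<noteq> c \<and> b \<noteq> c
        \<and> \<not> E a b \<and> \<not> E a c \<and> \<not> E b c)"

definition graph_iso :: "'a set \<Rightarrow> ('a \<Rightarrow> 'a \<Rightarrow> bool) \<Rightarrow> 'b set \<Rightarrow> ('b \<Rightarrow> 'b \<Rightarrow> bool) \<Rightarrow> bool" where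
  "graph_iso V E W F \<longleftrightarrow> (\<exists>f. bij_betw f V W \<and> (\<forall>x\<in>V. \<forall>y\<in>V. E x y \<longleftrightarrow> F (f x) (f y)))"

definition K4_V :: "nat set" where "K4_V = {0..<4}"
definition K4_E :: "nat \<Rightarrow> nat \<Rightarrow> bool" where "K4_E x y \<longleftrightarrow> x \<in> K4_V \<and> y \<in> K4_V \<and> x \<noteq> y"

definition is_triangle :: "('a \<Rightarrow> 'a \<Rightarrow> bool) \<Rightarrow> 'a set \<Rightarrow> bool" where
  "is_triangle E U \<longleftrightarrow> card U = 3 \<and> (\<forall>x\<in>U. \<forall>y\<in>U. x \<noteq> y \<longrightarrow> E x y)"

definition is_diamond :: "('a \<Rightarrow> 'a \<Rightarrow> bool) \<Rightarrow> 'a set \<Rightarrow> bool" where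
  "is_diamond E U \<longleftrightarrow> (\<exists>a b c d. U = {a, b, c, d} \<and> distinct [a, b, c, d] \<and> \<not> E a b
      \<and> E a c \<and> E a d \<and> E b c \<and> E b d \<and> E c d)"

definition unit_partition :: "'a set \<Rightarrow> ('a \<Rightarrow> 'a \<Rightarrow> bool) \<Rightarrow> 'a set set \<Rightarrow> bool" where
  "unit_partition V E P \<longleftrightarrow> \<Union>P = V \<and> (\<forall>U\<in>P. \<forall>U'\<in>P. U \<noteq> U' \<longrightarrow> U \<inter> U' = {})
      \<and> (\<forall>U\<in>P. is_triangle E U \<or> is_diamond E U)"

text \<open>u(G): number of units of the (unique) unit partition.\<close>
definition num_units :: "'a set \<Rightarrow> ('a \<Rightarrow> 'a \<Rightarrow> bool) \<Rightarrow> nat" where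
  "num_units V E = card (THE P. unit_partition V E P)"

text \<open>Diamond necklace N_k: vertex (i,j), i<k, j=0,1,2,3 for a_i,b_i,c_i,d_i.\<close>
definition necklace_V :: "nat \<Rightarrow> (nat \<times> nat) set" where
  "necklace_V k = {0..<k} \<times> {0..<4}"

definition necklace_E :: "nat \<Rightarrow> nat \<times> nat \<Rightarrow> nat \<times> nat \<Rightarrow> bool" where
  "necklace_E k x y \<longleftrightarrow> x \<in> necklace_V k \<and> y \<in> necklace_V k \<and>
     ((fst x = fst y \<and> snd x \<noteq> snd y \<and> {snd x, snd y} \<noteq> {0, 1})
      \<or> (snd x = 0 \<and> snd y = 1 \<and> fst y = Suc (fst x) mod k)
      \<or> (snd y = 0 \<and> snd x = 1 \<and> fst x = Suc (fst y) mod k))"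

text \<open>One round of the (p,q) colour change rule applied to the blue set B.\<close>
definition spread_step :: "'a set \<Rightarrow> ('a \<Rightarrow> 'a \<Rightarrow> bool) \<Rightarrow> nat \<Rightarrow> enat \<Rightarrow> 'a set \<Rightarrow> 'a set" where
  "spread_step V E p q B = B \<union> {w \<in> V - B. card (nbrs E w \<inter> B) \<ge> p \<and>
      (\<exists>x \<in> nbrs E w \<inter> B. enat (card (nbrs E x - B)) \<le> q)}"

definition spreading_set :: "'a set \<Rightarrow> ('a \<Rightarrow> 'a \<Rightarrow> bool) \<Rightarrow> nat \<Rightarrow> enat \<Rightarrow> 'a set \<Rightarrow> bool" where
  "spreading_set V E p q S \<longleftrightarrow> S \<subseteq> V \<and> (\<exists>n. (spread_step V E p q ^^ n) S = V)"

definition sigma :: "'a set \<Rightarrow> ('a \<Rightarrow> 'a \<Rightarrow> bool) \<Rightarrow> nat \<Rightarrow> enat \<Rightarrow> nat" where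
  "sigma V E p q = (LEAST n. \<exists>S. spreading_set V E p q S \<and> card S = n)"

end

(* In a cubic graph the (2,3) colour change rule is 2-neighbour bootstrap percolation, so a set
   spreads iff it lies in no proper subset of V that contains every vertex with two neighbours
   in it. A vertex of a unit has at most one neighbour outside it, so the complement of a unit is
   closed: a spreading set meets every unit, and sigma >= u.

   If every unit is a diamond, walking from an end of a diamond to its outside neighbour and on
   to the opposite end of that diamond runs through all units and exhibits G as a necklace. One
   vertex per unit never spreads there (a chosen end t of a unit U leaves V - (U - {t}) closed,
   and a set of centres is closed itself), while the centres together with one end do spread, so
   sigma = u + 1.

   If some unit is a triangle, some edge x0 x' leaving a triangle unit is not a bridge; otherwise
   the parts of G beyond successive bridges leaving units would shrink forever. Rank the vertices
   by their distance from x' in G - x0 x' and choose x0 in its triangle, a centre in every diamond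
   and, in every other triangle, a vertex other than the one of least rank. The units then fill up
   in order of least rank, so sigma = u. *)

theory Submission
  imports Defs
begin

section \<open>Cubic graphs and 2-neighbour spreading\<close>

locale cubic_graph =
  fixes V :: "'a set" and E :: "'a \<Rightarrow> 'a \<Rightarrow> bool"
  assumes graph: "simple_graph V E" and degree_3: "cubic V E"
begin

lemma finite_V: "finite V"
  using graph by (simp add: simple_graph_def)

lemma adj_in_V1: "E x y \<Longrightarrow> x \<in> V"
  using graph by (simp add: simple_graph_def)

lemma adj_in_V2: "E x y \<Longrightarrow> y \<in> V"
  using graph by (simp add: simple_graph_def)

lemma adj_sym: "E x y \<Longrightarrow> E y x"
  using graph by (simp add: simple_graph_def)

lemma symp_adj: "symp E"
  using adj_sym by (rule sympI)

lemma adj_irrefl: "\<not> E x x"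
  using graph by (simp add: simple_graph_def)

lemma adj_neq: "E x y \<Longrightarrow> x \<noteq> y"
  using adj_irrefl by auto

lemma nbrs_subset_V: "nbrs E v \<subseteq> V"
  using adj_in_V2 by (auto simp: nbrs_def)

lemma finite_nbrs: "finite (nbrs E v)"
  using nbrs_subset_V finite_V finite_subset by blast

lemma card_nbrs: "v \<in> V \<Longrightarrow> card (nbrs E v) = 3"
  using degree_3 by (simp add: cubic_def)

lemma nbrs_eq_three:
  assumes "v \<in> V"
  obtains p q r where "p \<noteq> q" "q \<noteq> r" "p \<noteq> r" "nbrs E v = {p,q,r}"
  using card_nbrs[OF assms] by (auto simp: card_3_iff)

lemma no_four_nbrs:
  assumes "E v a" "E v b" "E v c" "E v d"
    and "a \<noteq> b" "a \<noteq> c" "a \<noteq> d" "b \<noteq> c" "b \<noteq> d" "c \<noteq> d"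
  shows False
proof -
  have "{a,b,c,d} \<subseteq> nbrs E v" using assms by (auto simp: nbrs_def)
  hence "card {a,b,c,d} \<le> card (nbrs E v)" using finite_nbrs card_mono by blast
  moreover have "card {a,b,c,d} = 4" using assms by auto
  ultimately show False using card_nbrs adj_in_V1 assms(1) by simp
qed

lemma nbr_among_three:
  assumes "E v a" "E v b" "E v c" "a \<noteq> b" "a \<noteq> c" "b \<noteq> c" "E v y"
  shows "y = a \<or> y = b \<or> y = c"
  using no_four_nbrs[OF assms(1-3,7)] assms by blast

lemma nbrs_eqI:
  assumes "E v a" "E v b" "E v c" "a \<noteq> b" "a \<noteq> c" "b \<noteq> c"
  shows "nbrs E v = {a,b,c}"
  using nbr_among_three[OF assms] assms by (auto simp: nbrs_def)

lemma obtain_third_nbr: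
  assumes "E v a" "E v b" "a \<noteq> b"
  obtains c where "E v c" "c \<noteq> a" "c \<noteq> b"
proof -
  obtain p q r where "p \<noteq> q" "q \<noteq> r" "p \<noteq> r" and N: "nbrs E v = {p,q,r}"
    using nbrs_eq_three adj_in_V1 assms(1) by metis
  moreover have "a \<in> {p,q,r}" "b \<in> {p,q,r}"
    using assms N by (auto simp: nbrs_def set_eq_iff)
  ultimately obtain c where "c \<in> nbrs E v" "c \<noteq> a" "c \<noteq> b" by (metis insert_iff)
  thus ?thesis using that by (auto simp: nbrs_def)
qed

text \<open>In a cubic graph no vertex has more than 3 white neighbours, so the condition involving
  \<open>q = 3\<close> is void and only the rule with \<open>p = 2\<close> matters.\<close>

definition spread_closed :: "'a set \<Rightarrow> bool" where
  "spread_closed C \<longleftrightarrow> (\<forall>w\<in>V. \<forall>p q. p \<noteq> q \<and> E w p \<and> E w q \<and> p \<in> C \<and> q \<in> C \<longrightarrow> w \<in> C)"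

lemma spread_closedD:
  "spread_closed C \<Longrightarrow> w \<in> V \<Longrightarrow> p \<noteq> q \<Longrightarrow> E w p \<Longrightarrow> E w q \<Longrightarrow> p \<in> C \<Longrightarrow> q \<in> C \<Longrightarrow> w \<in> C"
  by (auto simp: spread_closed_def)

lemma spread_step_subset_closed:
  assumes "spread_closed C" "B \<subseteq> C"
  shows "spread_step V E 2 3 B \<subseteq> C"
proof
  fix w assume "w \<in> spread_step V E 2 3 B"
  hence "w \<in> B \<or> (w \<in> V \<and> 2 \<le> card (nbrs E w \<inter> B))" by (auto simp: spread_step_def)
  thus "w \<in> C"
  proof
    assume w: "w \<in> V \<and> 2 \<le> card (nbrs E w \<inter> B)"
    then obtain p q where "p \<in> nbrs E w \<inter> B" "q \<in> nbrs E w \<inter> B" "p \<noteq> q"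
      using card_le_Suc0_iff_eq[of "nbrs E w \<inter> B"] finite_nbrs by fastforce
    thus ?thesis using spread_closedD[OF assms(1)] w assms(2) by (auto simp: nbrs_def)
  qed (use assms in blast)
qed

lemma spreading_set_subset_closed:
  assumes "spreading_set V E 2 3 S" "spread_closed C" "S \<subseteq> C"
  shows "V \<subseteq> C"
proof -
  obtain n where "(spread_step V E 2 3 ^^ n) S = V"
    using assms(1) by (auto simp: spreading_set_def)
  moreover have "(spread_step V E 2 3 ^^ m) S \<subseteq> C" for m
    by (induction m) (use assms spread_step_subset_closed in auto)
  ultimately show ?thesis by metis
qed

lemma spread_step_fixpoint_closed:
  assumes "B \<subseteq> V" "spread_step V E 2 3 B = B"
  shows "spread_closed B"
  unfolding spread_closed_def
proof (intro ballI allI impI)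
  fix w p q assume w: "w \<in> V" and pq: "p \<noteq> q \<and> E w p \<and> E w q \<and> p \<in> B \<and> q \<in> B"
  have "{p,q} \<subseteq> nbrs E w \<inter> B" using pq by (auto simp: nbrs_def)
  hence "2 \<le> card (nbrs E w \<inter> B)"
    using pq finite_nbrs card_mono[of "nbrs E w \<inter> B" "{p,q}"] by auto
  moreover have "card (nbrs E p - B) \<le> 3"
    using card_nbrs[OF adj_in_V2] pq finite_nbrs card_mono[of "nbrs E p" "nbrs E p - B"] by auto
  hence "enat (card (nbrs E p - B)) \<le> 3" by (simp add: numeral_eq_enat)
  ultimately have "w \<notin> B \<Longrightarrow> w \<in> spread_step V E 2 3 B"
    using w pq unfolding spread_step_def nbrs_def by blast
  thus "w \<in> B" using assms(2) by blast
qed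

lemma spreading_setI:
  assumes "S \<subseteq> V" and "\<And>C. spread_closed C \<Longrightarrow> S \<subseteq> C \<Longrightarrow> C \<subseteq> V \<Longrightarrow> V \<subseteq> C"
  shows "spreading_set V E 2 3 S"
proof -
  define B where "B n = (spread_step V E 2 3 ^^ n) S" for n
  have B_Suc: "B (Suc n) = spread_step V E 2 3 (B n)" for n
    by (simp add: B_def)
  have B_V: "B n \<subseteq> V" for n
    by (induction n) (auto simp: B_def assms(1) spread_step_def)
  have B_mono: "B n \<subseteq> B (Suc n)" for n
    by (auto simp: B_Suc spread_step_def)
  have "\<exists>n. B (Suc n) = B n"
  proof (rule ccontr)
    assume "\<nexists>n. B (Suc n) = B n"
    hence "B n \<subset> B (Suc n)" for n using B_mono by blast
    hence "card (B n) < card (B (Suc n))" for n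
      using B_V finite_V by (meson finite_subset psubset_card_mono)
    hence "n \<le> card (B n)" for n
      by (induction n) (auto simp: Suc_le_eq intro: le_less_trans)
    moreover have "card (B n) \<le> card V" for n
      using B_V finite_V card_mono by blast
    ultimately show False by (metis Suc_n_not_le_n le_trans)
  qed
  then obtain n where "spread_step V E 2 3 (B n) = B n" by (auto simp: B_Suc)
  hence "spread_closed (B n)" using spread_step_fixpoint_closed B_V by blast
  moreover have "S \<subseteq> B n"
    using B_mono by (induction n) (auto simp: B_def)
  ultimately have "B n = V" using assms(2) B_V by blast
  thus ?thesis using assms(1) by (auto simp: spreading_set_def B_def)
qed

lemma sigma_eqI:
  assumes "spreading_set V E 2 3 S" "card S = m" "\<And>S. spreading_set V E 2 3 S \<Longrightarrow> m \<le> card S"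
  shows "sigma V E 2 3 = m"
  unfolding sigma_def by (rule Least_equality) (use assms in auto)

end

section \<open>Units\<close>

lemma is_triangleE:
  assumes "is_triangle E U"
  obtains x y z where "U = {x,y,z}" "x \<noteq> y" "x \<noteq> z" "y \<noteq> z" "E x y" "E x z" "E y z"
proof -
  obtain x y z where "U = {x,y,z}" "x \<noteq> y" "y \<noteq> z" "x \<noteq> z"
    using assms by (auto simp: is_triangle_def card_3_iff)
  moreover from this have "E x y" "E x z" "E y z"
    using assms by (auto simp: is_triangle_def)
  ultimately show ?thesis using that by blast
qed

lemma is_diamondE:
  assumes "is_diamond E U"
  obtains a b c d where "U = {a,b,c,d}" "a \<noteq> b" "a \<noteq> c" "a \<noteq> d" "b \<noteq> c" "b \<noteq> d" "c \<noteq> d"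
    "\<not> E a b" "E a c" "E a d" "E b c" "E b d" "E c d"
  using assms that by (auto simp: is_diamond_def)

lemma triangle_not_diamond: "is_triangle E U \<Longrightarrow> \<not> is_diamond E U"
  by (auto simp: is_triangle_def is_diamond_def)

lemma cut_triangle_or_diamond:
  assumes sym: "symp E"
    and U: "is_triangle E U \<or> is_diamond E U" and "x \<in> U" "x \<in> X" "z \<in> U" "z \<notin> X"
  shows "(\<exists>a\<in>U \<inter> X. \<exists>b c. b \<noteq> c \<and> b \<in> U - X \<and> c \<in> U - X \<and> E a b \<and> E a c)
       \<or> (\<exists>b\<in>U - X. \<exists>a a'. a \<noteq> a' \<and> a \<in> U \<inter> X \<and> a' \<in> U \<inter> X \<and> E b a \<and> E b a')"
  using U
proof
  assume "is_triangle E U"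
  then obtain a b c where "U = {a,b,c}" "a \<noteq> b" "a \<noteq> c" "b \<noteq> c" "E a b" "E a c" "E b c"
    by (rule is_triangleE)
  moreover from this have "E b a" "E c a" "E c b" using sym by (auto dest: sympD)
  ultimately show ?thesis using assms(3-6)
    by (cases "a \<in> X"; cases "b \<in> X"; cases "c \<in> X") (simp; blast)+
next
  assume "is_diamond E U"
  then obtain a b c d where "U = {a,b,c,d}" "a \<noteq> b" "a \<noteq> c" "a \<noteq> d" "b \<noteq> c" "b \<noteq> d" "c \<noteq> d"
    "E a c" "E a d" "E b c" "E b d" "E c d"
    by (rule is_diamondE)
  moreover from this have "E c a" "E d a" "E c b" "E d b" "E d c" using sym by (auto dest: sympD)
  ultimately show ?thesis using assms(3-6)
    by (cases "a \<in> X"; cases "b \<in> X"; cases "c \<in> X"; cases "d \<in> X") (simp; blast)+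
qed

locale claw_free_cubic_graph = cubic_graph +
  assumes connected: "connected_graph V E" and no_claw: "claw_free V E"
    and not_K4: "\<not> graph_iso V E K4_V K4_E"
begin

lemma V_nonempty: "V \<noteq> {}"
  using connected by (simp add: connected_graph_def)

lemma V_subset_adj_closed:
  assumes "x \<in> K" "x \<in> V" "\<And>a b. a \<in> K \<Longrightarrow> E a b \<Longrightarrow> b \<in> K"
  shows "V \<subseteq> K"
proof
  fix y assume "y \<in> V"
  hence "E\<^sup>*\<^sup>* x y" using connected assms(2) by (simp add: connected_graph_def)
  thus "y \<in> K" by (induction rule: rtranclp_induct) (use assms in auto)
qed

lemma no_K4_subgraph:
  assumes "E a b" "E a c" "E a d" "E b c" "E b d" "E c d"
  shows False
proof -
  have d: "a \<noteq> b" "a \<noteq> c" "a \<noteq> d" "b \<noteq> c" "b \<noteq> d" "c \<noteq> d" using assms adj_neq by auto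
  have s: "E b a" "E c a" "E d a" "E c b" "E d b" "E d c" using assms adj_sym by auto
  let ?K = "{a,b,c,d}"
  have "V \<subseteq> ?K"
  proof (rule V_subset_adj_closed[of a])
    fix x y assume "x \<in> ?K" and xy: "E x y"
    then consider "x = a" | "x = b" | "x = c" | "x = d" by blast
    thus "y \<in> ?K"
    proof cases
      case 1 thus ?thesis using nbr_among_three[of a b c d y] assms d xy by auto
    next
      case 2 thus ?thesis using nbr_among_three[of b a c d y] assms d s xy by auto
    next
      case 3 thus ?thesis using nbr_among_three[of c a b d y] assms d s xy by auto
    next
      case 4 thus ?thesis using nbr_among_three[of d a b c y] assms d s xy by auto
    qed
  qed (use adj_in_V1[OF assms(1)] in auto)
  moreover have "?K \<subseteq> V" using assms adj_in_V1 adj_in_V2 by blast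
  ultimately have VK: "V = ?K" by blast
  define f where "f v = (if v = a then 0 else if v = b then 1 else if v = c then 2 else (3::nat))" for v
  have "bij_betw f V K4_V"
    unfolding bij_betw_def inj_on_def VK K4_V_def using d by (auto simp: f_def)
  moreover have "\<forall>x\<in>V. \<forall>y\<in>V. E x y \<longleftrightarrow> K4_E (f x) (f y)"
    unfolding VK K4_E_def K4_V_def using d assms s adj_irrefl by (auto simp: f_def)
  ultimately show False using not_K4 unfolding graph_iso_def by blast
qed

text \<open>The parts of the unit partition, described intrinsically: induced diamonds, and induced
  triangles not contained in one.\<close>

definition is_unit :: "'a set \<Rightarrow> bool" where
  "is_unit U \<longleftrightarrow> U \<subseteq> V \<and> (is_diamond E U \<or> (is_triangle E U \<and> \<not> (\<exists>D. is_diamond E D \<and> U \<subseteq> D)))"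

definition units :: "'a set set" where
  "units = {U. is_unit U}"

lemma two_nbrs_inside:
  assumes "is_triangle E U \<or> is_diamond E U" "x \<in> U"
  obtains y z where "y \<noteq> z" "y \<in> U" "z \<in> U" "E x y" "E x z"
  using assms(1)
proof
  assume "is_triangle E U"
  then obtain a b c where "U = {a,b,c}" "a \<noteq> b" "a \<noteq> c" "b \<noteq> c" "E a b" "E a c" "E b c"
    by (rule is_triangleE)
  moreover from this have "E b a" "E c a" "E c b" using adj_sym by auto
  ultimately show ?thesis using that assms(2) by blast
next
  assume "is_diamond E U"
  then obtain a b c d where "U = {a,b,c,d}" "a \<noteq> b" "a \<noteq> c" "a \<noteq> d" "b \<noteq> c" "b \<noteq> d" "c \<noteq> d"
    "E a c" "E a d" "E b c" "E b d" "E c d" by (rule is_diamondE)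
  moreover from this have "E c a" "E d a" "E c b" "E d b" "E d c" using adj_sym by auto
  ultimately show ?thesis using that assms(2) by blast
qed

lemma unit_subset_V: "is_unit U \<Longrightarrow> U \<subseteq> V"
  by (simp add: is_unit_def)

lemma unit_triangle_or_diamond: "is_unit U \<Longrightarrow> is_triangle E U \<or> is_diamond E U"
  by (auto simp: is_unit_def)

lemma unit_one_outside_nbr:
  assumes "is_unit U" "x \<in> U" "E x y" "E x y'" "y \<notin> U" "y' \<notin> U"
  shows "y = y'"
proof (rule ccontr)
  assume "y \<noteq> y'"
  obtain p q where "p \<noteq> q" "p \<in> U" "q \<in> U" "E x p" "E x q"
    using two_nbrs_inside[OF unit_triangle_or_diamond[OF assms(1)] assms(2)] by blast
  thus False using no_four_nbrs[of x p q y y'] assms \<open>y \<noteq> y'\<close> by blast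
qed

lemma triangle_extends_to_diamond:
  assumes "E p q" "E p r" "E q r" "p \<noteq> q" "p \<noteq> r" "q \<noteq> r" "y \<notin> {p,q,r}" "E y p" "E y q"
  shows "is_diamond E {r,y,p,q}"
proof -
  have "\<not> E r y" using no_K4_subgraph[of y p q r] assms adj_sym by blast
  moreover have "E r p" "E r q" using assms adj_sym by auto
  ultimately show ?thesis unfolding is_diamond_def using assms
    by (rule_tac x=r in exI, rule_tac x=y in exI, rule_tac x=p in exI, rule_tac x=q in exI) auto
qed

text \<open>A vertex outside a diamond adjacent to both ends \<open>a, b\<close> would be the centre of a claw with
  its third neighbour, because \<open>a\<close> and \<open>b\<close> have no neighbours left.\<close>

lemma outside_one_nbr_in_unit:
  assumes "is_unit U" "y \<in> V" "y \<notin> U" "E y p" "E y q" "p \<in> U" "q \<in> U"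
  shows "p = q"
proof (rule ccontr)
  assume pq: "p \<noteq> q"
  from unit_triangle_or_diamond[OF assms(1)] show False
  proof
    assume T: "is_triangle E U"
    then obtain r where r: "r \<in> U" "r \<noteq> p" "r \<noteq> q"
      using pq assms(6,7) by (elim is_triangleE) blast
    have U: "U = {p,q,r}"
      using T r pq assms(6,7) card_3_iff[of U] unfolding is_triangle_def by blast
    have "\<And>s t. s \<in> U \<Longrightarrow> t \<in> U \<Longrightarrow> s \<noteq> t \<Longrightarrow> E s t" using T by (auto simp: is_triangle_def)
    hence "is_diamond E {r,y,p,q}"
      using triangle_extends_to_diamond[of p q r y] assms r pq U by auto
    moreover have "U \<subseteq> {r,y,p,q}" using U by auto
    ultimately show False using assms(1) T triangle_not_diamond by (auto simp: is_unit_def)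
  next
    assume "is_diamond E U"
    then obtain a b c d where U: "U = {a,b,c,d}" "a \<noteq> b" "a \<noteq> c" "a \<noteq> d" "b \<noteq> c" "b \<noteq> d" "c \<noteq> d"
      "\<not> E a b" "E a c" "E a d" "E b c" "E b d" "E c d" by (rule is_diamondE)
    have s: "E c a" "E d a" "E c b" "E d b" "E d c" using U adj_sym by auto
    have yc: "\<not> E y c" using nbr_among_three[of c a b d y] s U assms(3) adj_sym by blast
    have yd: "\<not> E y d" using nbr_among_three[of d a b c y] s U assms(3) adj_sym by blast
    have ab: "E y a" "E y b" using yc yd assms pq U by auto
    obtain t where t: "E y t" "t \<noteq> a" "t \<noteq> b" using obtain_third_nbr[OF ab U(2)] by blast
    have "t \<noteq> c" "t \<noteq> d" "t \<noteq> y" using t yc yd adj_neq by auto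
    have "\<not> E a t"
      using nbr_among_three[of a c d y t] U adj_sym[OF ab(1)] \<open>t \<noteq> c\<close> \<open>t \<noteq> d\<close> \<open>t \<noteq> y\<close> assms(3) by blast
    moreover have "\<not> E b t"
      using nbr_among_three[of b c d y t] U adj_sym[OF ab(2)] \<open>t \<noteq> c\<close> \<open>t \<noteq> d\<close> \<open>t \<noteq> y\<close> assms(3) by blast
    ultimately show False using no_claw assms(2) ab t U(2) U(8) unfolding claw_free_def by blast
  qed
qed

lemma units_overlap_eq:
  assumes "is_unit U1" "is_unit U2" "v \<in> U1" "v \<in> U2"
  shows "U1 = U2"
proof -
  have "U2 \<subseteq> U1" if U1: "is_unit U1" and U2: "is_unit U2" and v: "v \<in> U1" "v \<in> U2" for U1 U2
  proof (rule ccontr)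
    assume "\<not> U2 \<subseteq> U1"
    then obtain z where "z \<in> U2" "z \<notin> U1" by blast
    from cut_triangle_or_diamond[OF symp_adj unit_triangle_or_diamond[OF U2] v(2,1) this]
    show False
    proof (elim disjE bexE exE conjE)
      fix a b c assume "a \<in> U2 \<inter> U1" "b \<noteq> c" "b \<in> U2 - U1" "c \<in> U2 - U1" "E a b" "E a c"
      thus False using unit_one_outside_nbr[OF U1] by blast
    next
      fix b a a' assume "b \<in> U2 - U1" "a \<noteq> a'" "a \<in> U2 \<inter> U1" "a' \<in> U2 \<inter> U1" "E b a" "E b a'"
      thus False using outside_one_nbr_in_unit[OF U1] unit_subset_V[OF U2] by blast
    qed
  qed
  thus ?thesis using assms by blast
qed

text \<open>Claw-freeness puts every vertex in a triangle; the unit is either that triangle or a diamond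
  containing it.\<close>

lemma unit_exists:
  assumes "v \<in> V"
  obtains U where "is_unit U" "v \<in> U"
proof -
  obtain p q r where pqr: "p \<noteq> q" "q \<noteq> r" "p \<noteq> r" and N: "nbrs E v = {p,q,r}"
    using nbrs_eq_three[OF assms] by metis
  have e: "E v p" "E v q" "E v r" using N by (auto simp: nbrs_def set_eq_iff)
  have "E p q \<or> E p r \<or> E q r"
    using no_claw assms e pqr unfolding claw_free_def by blast
  then obtain s t where st: "E v s" "E v t" "E s t" "s \<noteq> t" using e pqr by blast
  let ?T = "{v,s,t}"
  show ?thesis
  proof (cases "\<exists>D. is_diamond E D \<and> ?T \<subseteq> D")
    case True
    then obtain D where D: "is_diamond E D" "?T \<subseteq> D" by blast
    hence "D \<subseteq> V" using adj_in_V1 adj_in_V2 unfolding is_diamond_def by blast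
    thus ?thesis using that D unfolding is_unit_def by blast
  next
    case False
    have "is_triangle E ?T"
      using st adj_neq adj_sym unfolding is_triangle_def by (auto simp: card_insert_if)
    moreover have "?T \<subseteq> V" using st assms adj_in_V2 by blast
    ultimately show ?thesis using that False unfolding is_unit_def by blast
  qed
qed

lemma unit_partition_units: "unit_partition V E units"
  unfolding unit_partition_def
proof (intro conjI ballI impI)
  show "\<Union>units = V"
  proof
    show "\<Union>units \<subseteq> V" using unit_subset_V unfolding units_def by blast
    show "V \<subseteq> \<Union>units"
    proof
      fix v assume "v \<in> V"
      then obtain U where "is_unit U" "v \<in> U" by (rule unit_exists)
      thus "v \<in> \<Union>units" unfolding units_def by blast
    qed
  qed
  show "U \<inter> U' = {}" if "U \<in> units" "U' \<in> units" "U \<noteq> U'" for U U'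
    using that units_overlap_eq unfolding units_def by blast
  show "is_triangle E U \<or> is_diamond E U" if "U \<in> units" for U
    using that unit_triangle_or_diamond unfolding units_def by blast
qed

lemma partition_triangle_not_in_diamond:
  assumes Q: "unit_partition V E Q" and U: "U \<in> Q" "is_triangle E U"
    and D: "is_diamond E D" "U \<subseteq> D"
  shows False
proof -
  have "card U = 3" using U by (simp add: is_triangle_def)
  moreover have "card D = 4" "finite D" using D(1) by (auto simp: is_diamond_def)
  ultimately have "card (D - U) = 1"
    using D(2) by (simp add: card_Diff_subset finite_subset)
  then obtain w where w: "D - U = {w}" by (rule card_1_singletonE)
  obtain y z where yz: "y \<noteq> z" "y \<in> D" "z \<in> D" "E w y" "E w z"
    using two_nbrs_inside[of D w] D(1) w by blast
  moreover have "y \<noteq> w" "z \<noteq> w" using yz adj_neq by auto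
  ultimately have "y \<in> U" "z \<in> U" using w by blast+
  have "w \<in> V" using yz adj_in_V1 by blast
  then obtain U2 where U2: "U2 \<in> Q" "w \<in> U2" using Q unfolding unit_partition_def by blast
  have "y \<notin> U2" "z \<notin> U2" using Q U(1) U2 w \<open>y \<in> U\<close> \<open>z \<in> U\<close> unfolding unit_partition_def by blast+
  moreover obtain y2 z2 where "y2 \<noteq> z2" "y2 \<in> U2" "z2 \<in> U2" "E w y2" "E w z2"
    using two_nbrs_inside U2 Q unfolding unit_partition_def by metis
  ultimately show False using no_four_nbrs[of w y z y2 z2] yz \<open>y \<in> U\<close> \<open>z \<in> U\<close> by blast
qed

lemma unit_partition_unique:
  assumes Q: "unit_partition V E Q"
  shows "Q = units"
proof -
  have QV: "\<Union>Q = V" and Qtd: "\<And>U. U \<in> Q \<Longrightarrow> is_triangle E U \<or> is_diamond E U"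
    using Q unfolding unit_partition_def by blast+
  have Q_units: "is_unit U" if "U \<in> Q" for U
    using QV Qtd[OF that] partition_triangle_not_in_diamond[OF Q that] that
    unfolding is_unit_def by blast
  have "U \<in> Q" if U: "is_unit U" for U
  proof -
    obtain v where "v \<in> U"
      using unit_triangle_or_diamond[OF U] unfolding is_triangle_def is_diamond_def by fastforce
    moreover from this obtain U' where "U' \<in> Q" "v \<in> U'" using QV unit_subset_V[OF U] by blast
    ultimately show ?thesis using units_overlap_eq[OF Q_units U] by blast
  qed
  thus ?thesis using Q_units unfolding units_def by blast
qed

lemma num_units_eq_card: "num_units V E = card units"
  unfolding num_units_def
  using the_equality[of "unit_partition V E", OF unit_partition_units unit_partition_unique] by simp

definition unit_of :: "'a \<Rightarrow> 'a set" where
  "unit_of v = (THE U. U \<in> units \<and> v \<in> U)"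

lemma units_subset_V: "U \<in> units \<Longrightarrow> U \<subseteq> V"
  using unit_subset_V by (auto simp: units_def)

lemma units_triangle_or_diamond: "U \<in> units \<Longrightarrow> is_triangle E U \<or> is_diamond E U"
  using unit_triangle_or_diamond by (auto simp: units_def)

lemma units_eq: "U \<in> units \<Longrightarrow> U' \<in> units \<Longrightarrow> v \<in> U \<Longrightarrow> v \<in> U' \<Longrightarrow> U = U'"
  using units_overlap_eq by (auto simp: units_def)

lemma units_one_outside_nbr:
  "U \<in> units \<Longrightarrow> x \<in> U \<Longrightarrow> E x y \<Longrightarrow> E x y' \<Longrightarrow> y \<notin> U \<Longrightarrow> y' \<notin> U \<Longrightarrow> y = y'"
  using unit_one_outside_nbr by (simp add: units_def)

lemma finite_units: "finite units"
  using finite_V units_subset_V by (metis Pow_iff finite_Pow_iff finite_subset subsetI)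

lemma finite_unit: "U \<in> units \<Longrightarrow> finite U"
  using units_subset_V finite_V finite_subset by blast

lemma unit_nonempty: "U \<in> units \<Longrightarrow> U \<noteq> {}"
  using units_triangle_or_diamond unfolding is_triangle_def is_diamond_def by fastforce

lemma unit_other_vertex:
  assumes "U \<in> units"
  obtains w where "w \<in> U" "w \<noteq> v"
proof -
  obtain x where "x \<in> U" using unit_nonempty[OF assms] by blast
  then obtain y z where "y \<noteq> z" "y \<in> U" "z \<in> U"
    using two_nbrs_inside units_triangle_or_diamond[OF assms] by metis
  thus ?thesis using that by blast
qed

lemma unit_of_eq: "U \<in> units \<Longrightarrow> v \<in> U \<Longrightarrow> unit_of v = U"
  unfolding unit_of_def using units_eq by (intro the_equality) blast+

lemma unit_of_in_units: "v \<in> V \<Longrightarrow> unit_of v \<in> units"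
  and in_unit_of: "v \<in> V \<Longrightarrow> v \<in> unit_of v"
proof -
  assume "v \<in> V"
  then obtain U where "is_unit U" "v \<in> U" by (rule unit_exists)
  moreover from this have "unit_of v = U" using unit_of_eq by (simp add: units_def)
  ultimately show "unit_of v \<in> units" "v \<in> unit_of v" by (simp_all add: units_def)
qed

lemma unit_of_subset_V: "v \<in> V \<Longrightarrow> unit_of v \<subseteq> V"
  using units_subset_V unit_of_in_units by blast

lemma unit_of_member: "v \<in> V \<Longrightarrow> w \<in> unit_of v \<Longrightarrow> unit_of w = unit_of v"
  using unit_of_eq unit_of_in_units by blast

lemma not_in_unit_of_sym:
  assumes "E x y" "y \<notin> unit_of x"
  shows "x \<notin> unit_of y"
proof
  assume "x \<in> unit_of y"
  hence "unit_of x = unit_of y" using unit_of_member adj_in_V2[OF assms(1)] by blast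
  thus False using assms in_unit_of adj_in_V2 by metis
qed

lemma triangle_unitE:
  assumes "U \<in> units" "\<not> is_diamond E U"
  obtains x y z where "U = {x,y,z}" "x \<noteq> y" "x \<noteq> z" "y \<noteq> z" "E x y" "E x z" "E y z"
  using units_triangle_or_diamond[OF assms(1)] assms(2) is_triangleE by blast

lemma triangle_unit_outside_nbr:
  assumes "U \<in> units" "\<not> is_diamond E U" "x \<in> U"
  obtains y where "E x y" "y \<notin> U"
proof -
  obtain a b c where U: "U = {a,b,c}" "a \<noteq> b" "a \<noteq> c" "b \<noteq> c" "E a b" "E a c" "E b c"
    using triangle_unitE[OF assms(1,2)] by blast
  have "E b a" "E c a" "E c b" using U adj_sym by auto
  then obtain p q where pq: "p \<noteq> q" "p \<in> U" "q \<in> U" "p \<noteq> x" "q \<noteq> x" "E x p" "E x q"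
    using U assms(3) by blast
  obtain t where t: "E x t" "t \<noteq> p" "t \<noteq> q" using obtain_third_nbr[OF pq(6,7,1)] by blast
  have "t \<noteq> x" using t adj_neq by blast
  hence "t \<notin> U" using pq t U assms(3) by auto
  thus ?thesis using t that by blast
qed

text \<open>In a diamond \<open>{a,b,c,d}\<close> with non-edge \<open>a b\<close>, we call \<open>a, b\<close> its ends and \<open>c, d\<close>
  its centres.\<close>

lemma diamond_unitE:
  assumes "U \<in> units" "is_diamond E U"
  obtains a b c d a' b' where "U = {a,b,c,d}" "a \<noteq> b" "a \<noteq> c" "a \<noteq> d" "b \<noteq> c" "b \<noteq> d" "c \<noteq> d"
    "\<not> E a b" "E a c" "E a d" "E b c" "E b d" "E c d"
    "nbrs E c = {a,b,d}" "nbrs E d = {a,b,c}" "nbrs E a = {c,d,a'}" "nbrs E b = {c,d,b'}"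
    "a' \<notin> U" "b' \<notin> U"
proof -
  obtain a b c d where U: "U = {a,b,c,d}" "a \<noteq> b" "a \<noteq> c" "a \<noteq> d" "b \<noteq> c" "b \<noteq> d" "c \<noteq> d"
    "\<not> E a b" "E a c" "E a d" "E b c" "E b d" "E c d" using is_diamondE[OF assms(2)] by blast
  have s: "E c a" "E d a" "E c b" "E d b" "E d c" using U adj_sym by auto
  obtain a' where a': "E a a'" "a' \<noteq> c" "a' \<noteq> d" using obtain_third_nbr[OF U(9,10,7)] by blast
  obtain b' where b': "E b b'" "b' \<noteq> c" "b' \<noteq> d" using obtain_third_nbr[OF U(11,12,7)] by blast
  have "a' \<noteq> a" "b' \<noteq> b" "a' \<noteq> b" "b' \<noteq> a" using a' b' adj_neq U(8) adj_sym by auto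
  hence "a' \<notin> U" "b' \<notin> U" using a' b' U by auto
  moreover have "nbrs E c = {a,b,d}" "nbrs E d = {a,b,c}" "nbrs E a = {c,d,a'}" "nbrs E b = {c,d,b'}"
    using nbrs_eqI[of c a b d] nbrs_eqI[of d a b c] nbrs_eqI[of a c d a'] nbrs_eqI[of b c d b']
      s U a' b' by auto
  ultimately show ?thesis using that U by blast
qed

lemma diamond_unit_centre:
  assumes "U \<in> units" "is_diamond E U"
  obtains c where "c \<in> U" "nbrs E c \<subseteq> U"
proof -
  obtain a b c d a' b' where "U = {a,b,c,d}" "nbrs E c = {a,b,d}"
    using diamond_unitE[OF assms] by metis
  thus ?thesis using that[of c] by blast
qed

lemma diamond_unit_end:
  assumes "U \<in> units" "is_diamond E U"
  obtains e e' where "e \<in> U" "E e e'" "e' \<notin> U"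
proof -
  obtain a b c d a' b' where "U = {a,b,c,d}" "nbrs E a = {c,d,a'}" "a' \<notin> U"
    using diamond_unitE[OF assms] by metis
  thus ?thesis using that[of a a'] by (auto simp: nbrs_def set_eq_iff)
qed

lemma diamond_ends_nonadj:
  assumes "U \<in> units" "is_diamond E U" "x \<in> U" "y \<in> U" "x \<noteq> y"
    and "E x t" "t \<notin> U" "E y t'" "t' \<notin> U"
  shows "\<not> E x y"
proof -
  obtain a b c d a' b' where D: "U = {a,b,c,d}" "a \<noteq> b" "\<not> E a b"
    "nbrs E c = {a,b,d}" "nbrs E d = {a,b,c}"
    using diamond_unitE[OF assms(1,2)] by metis
  have "t \<in> nbrs E x" "t' \<in> nbrs E y" using assms by (auto simp: nbrs_def)
  hence "{x,y} = {a,b}" using D assms by auto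
  thus ?thesis using D adj_sym by (auto simp: doubleton_eq_iff)
qed

lemma diamond_unit_from_centre_end:
  assumes "U \<in> units" "is_diamond E U" "s \<in> U" "nbrs E s \<subseteq> U" "p \<in> U" "E p q" "q \<notin> U"
  obtains b d where "U = {p,b,s,d}" "E p s" "E p d" "E b s" "E b d" "E s d"
proof -
  obtain a b c d a' b' where D: "U = {a,b,c,d}" "a \<noteq> b" "a \<noteq> c" "a \<noteq> d" "b \<noteq> c" "b \<noteq> d" "c \<noteq> d"
    "\<not> E a b" "E a c" "E a d" "E b c" "E b d" "E c d"
    "nbrs E c = {a,b,d}" "nbrs E d = {a,b,c}" "nbrs E a = {c,d,a'}" "nbrs E b = {c,d,b'}"
    "a' \<notin> U" "b' \<notin> U"
    using diamond_unitE[OF assms(1,2)] by metis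
  have sy: "E c a" "E d a" "E c b" "E d b" "E d c" using D adj_sym by auto
  have "s \<noteq> a" "s \<noteq> b" using assms(4) D by auto
  hence "s = c \<or> s = d" using assms(3) D by auto
  moreover have "q \<in> nbrs E p" using assms(6) by (simp add: nbrs_def)
  hence "p \<noteq> c" "p \<noteq> d" using D assms(7) by auto
  hence "p = a \<or> p = b" using assms(5) D by auto
  ultimately show ?thesis
  proof (elim disjE)
    assume "s = c" "p = a" thus ?thesis using that[of b d] D by blast
  next
    assume "s = c" "p = b" thus ?thesis using that[of a d] D sy by blast
  next
    assume "s = d" "p = a" thus ?thesis using that[of b c] D sy by blast
  next
    assume "s = d" "p = b" thus ?thesis using that[of a c] D sy by blast
  qed
qed

section \<open>Spreading sets and units\<close>

lemma spread_closed_fills_unit: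
  assumes C: "spread_closed C" and U: "U \<in> units"
    and s: "s \<in> U" "s \<in> C" "is_diamond E U \<Longrightarrow> nbrs E s \<subseteq> U"
    and p: "p \<in> U" "p \<noteq> s" "E p q" "q \<notin> U" "q \<in> C"
  shows "U \<subseteq> C"
proof (cases "is_diamond E U")
  case False
  then obtain x y z where T: "U = {x,y,z}" "x \<noteq> y" "x \<noteq> z" "y \<noteq> z" "E x y" "E x z" "E y z"
    using triangle_unitE[OF U] by blast
  have adj: "\<And>a b. a \<in> U \<Longrightarrow> b \<in> U \<Longrightarrow> a \<noteq> b \<Longrightarrow> E a b" using T adj_sym by auto
  have UV: "U \<subseteq> V" using units_subset_V U by blast
  have "p \<in> C" using spread_closedD[OF C, of p s q] adj[of p s] p s UV by auto
  moreover have "r \<in> C" if "r \<in> U" "r \<noteq> s" "r \<noteq> p" for r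
    using spread_closedD[OF C, of r s p] adj that s p UV \<open>p \<in> C\<close> by blast
  ultimately show ?thesis using s by blast
next
  case True
  then obtain b d where D: "U = {p,b,s,d}" "E p s" "E p d" "E b s" "E b d" "E s d"
    using diamond_unit_from_centre_end[OF U True s(1) s(3) p(1,3,4)] by blast
  have UV: "p \<in> V" "b \<in> V" "d \<in> V" using D adj_in_V1 adj_in_V2 by auto
  have "q \<noteq> s" using p(4) s(1) by blast
  hence "p \<in> C" using spread_closedD[OF C UV(1) _ D(2) p(3)] s(2) p(5) by blast
  moreover have "s \<noteq> p" "b \<noteq> d" "s \<noteq> d" using D adj_neq adj_sym by blast+
  ultimately have "d \<in> C" using spread_closedD[OF C UV(3), of p s] D s(2) adj_sym by blast
  hence "b \<in> C" using spread_closedD[OF C UV(2) \<open>s \<noteq> d\<close> D(4,5)] s(2) by blast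
  thus ?thesis using D \<open>p \<in> C\<close> \<open>d \<in> C\<close> s(2) by blast
qed

lemma unit_complement_closed: "U \<in> units \<Longrightarrow> spread_closed (V - U)"
  unfolding spread_closed_def
proof (intro ballI allI impI)
  fix w p q assume "U \<in> units" "w \<in> V" "p \<noteq> q \<and> E w p \<and> E w q \<and> p \<in> V - U \<and> q \<in> V - U"
  thus "w \<in> V - U" using units_one_outside_nbr[of U w p q] by blast
qed

lemma spreading_set_meets_unit:
  assumes "spreading_set V E 2 3 S" "U \<in> units"
  shows "S \<inter> U \<noteq> {}"
proof
  assume "S \<inter> U = {}"
  hence "S \<subseteq> V - U" using assms(1) by (auto simp: spreading_set_def)
  hence "V \<subseteq> V - U"
    using spreading_set_subset_closed[OF assms(1) unit_complement_closed[OF assms(2)]] by blast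
  thus False using unit_nonempty[OF assms(2)] units_subset_V[OF assms(2)] by blast
qed

lemma card_eq_sum_units:
  assumes "S \<subseteq> V"
  shows "card S = (\<Sum>U\<in>units. card (S \<inter> U))"
proof -
  have "S = (\<Union>U\<in>units. S \<inter> U)" using assms unit_partition_units by (auto simp: unit_partition_def)
  moreover have "\<forall>U\<in>units. \<forall>U'\<in>units. U \<noteq> U' \<longrightarrow> (S \<inter> U) \<inter> (S \<inter> U') = {}"
    using units_eq by blast
  moreover have "\<forall>U\<in>units. finite (S \<inter> U)" using finite_unit by blast
  ultimately show ?thesis using card_UN_disjoint[OF finite_units] by metis
qed

lemma card_units_le_spreading_set:
  assumes "spreading_set V E 2 3 S"
  shows "card units \<le> card S"
proof -
  have "S \<subseteq> V" using assms by (simp add: spreading_set_def)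
  moreover have "1 \<le> card (S \<inter> U)" if "U \<in> units" for U
    using spreading_set_meets_unit[OF assms that] finite_unit[OF that] by (simp add: Suc_le_eq card_gt_0_iff)
  hence "(\<Sum>U\<in>units. 1) \<le> (\<Sum>U\<in>units. card (S \<inter> U))" by (rule sum_mono)
  ultimately show ?thesis using card_eq_sum_units by simp
qed

lemma card_spreading_set_two_in_unit:
  assumes S: "spreading_set V E 2 3 S" and U0: "U0 \<in> units" "s \<in> S \<inter> U0" "t \<in> S \<inter> U0" "s \<noteq> t"
  shows "card units + 1 \<le> card S"
proof -
  have SV: "S \<subseteq> V" using S by (simp add: spreading_set_def)
  have "2 \<le> card (S \<inter> U0)"
    using U0 finite_unit card_mono[of "S \<inter> U0" "{s,t}"] by auto
  moreover have "1 \<le> card (S \<inter> U)" if "U \<in> units" for U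
    using spreading_set_meets_unit[OF S that] finite_unit[OF that] by (simp add: Suc_le_eq card_gt_0_iff)
  hence "(\<Sum>U\<in>units - {U0}. 1) \<le> (\<Sum>U\<in>units - {U0}. card (S \<inter> U))"
    by (intro sum_mono) blast
  hence "card (units - {U0}) \<le> (\<Sum>U\<in>units - {U0}. card (S \<inter> U))" by simp
  moreover have "card S = card (S \<inter> U0) + (\<Sum>U\<in>units - {U0}. card (S \<inter> U))"
    using card_eq_sum_units[OF SV] sum.remove[OF finite_units U0(1)] by simp
  moreover have "card units = card (units - {U0}) + 1"
    using card_Suc_Diff1[OF finite_units U0(1)] by simp
  ultimately show ?thesis by linarith
qed

lemma diamond_end_complement_closed:
  assumes U: "U \<in> units" "is_diamond E U" and t: "t \<in> U" "E t t'" "t' \<notin> U"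
  shows "spread_closed (V - (U - {t}))"
  unfolding spread_closed_def
proof (intro ballI allI impI)
  fix w p q assume w: "w \<in> V" and pq: "p \<noteq> q \<and> E w p \<and> E w q \<and> p \<in> V - (U - {t}) \<and> q \<in> V - (U - {t})"
  show "w \<in> V - (U - {t})"
  proof (rule ccontr)
    assume "w \<notin> V - (U - {t})"
    hence wU: "w \<in> U" "w \<noteq> t" using w by auto
    hence "\<not> (p \<notin> U \<and> q \<notin> U)" using units_one_outside_nbr[OF U(1) wU(1), of p q] pq by blast
    then obtain r where "E w r" "r \<notin> U" "E w t" using pq by blast
    thus False using diamond_ends_nonadj[OF U wU(1) t(1) wU(2)] t by blast
  qed
qed

lemma one_per_unit_closed:
  assumes "\<forall>s\<in>S. nbrs E s \<subseteq> unit_of s"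
    and one: "\<forall>U\<in>units. \<forall>s\<in>S \<inter> U. \<forall>s'\<in>S \<inter> U. s = s'"
  shows "spread_closed S"
  unfolding spread_closed_def
proof (intro ballI allI impI)
  fix w p q assume pq: "p \<noteq> q \<and> E w p \<and> E w q \<and> p \<in> S \<and> q \<in> S"
  hence "w \<in> unit_of p" "w \<in> unit_of q" using assms(1) adj_sym by (auto simp: nbrs_def)
  moreover have "p \<in> V" "q \<in> V" using pq adj_in_V2 by auto
  ultimately have "unit_of p = unit_of q" using unit_of_member by metis
  hence "q \<in> S \<inter> unit_of p" using pq in_unit_of[OF \<open>q \<in> V\<close>] by simp
  moreover have "p \<in> S \<inter> unit_of p" using pq in_unit_of[OF \<open>p \<in> V\<close>] by simp
  ultimately show "w \<in> S" using one unit_of_in_units[OF \<open>p \<in> V\<close>] pq by blast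
qed

lemma all_diamonds_spreading_set_lower_bound:
  assumes diamonds: "\<forall>U\<in>units. is_diamond E U" and S: "spreading_set V E 2 3 S"
  shows "card units + 1 \<le> card S"
proof (rule ccontr)
  assume "\<not> card units + 1 \<le> card S"
  hence one: "\<forall>U\<in>units. \<forall>s\<in>S \<inter> U. \<forall>s'\<in>S \<inter> U. s = s'"
    using card_spreading_set_two_in_unit[OF S] by blast
  have SV: "S \<subseteq> V" using S by (simp add: spreading_set_def)
  show False
  proof (cases "\<exists>t\<in>S. \<exists>t'. E t t' \<and> t' \<notin> unit_of t")
    case True
    then obtain t t' where t: "t \<in> S" "E t t'" "t' \<notin> unit_of t" by blast
    let ?U = "unit_of t"
    have U: "?U \<in> units" "t \<in> ?U" using SV t(1) unit_of_in_units in_unit_of by auto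
    have "S \<subseteq> V - (?U - {t})" using one U SV t(1) by blast
    hence "V \<subseteq> V - (?U - {t})"
      using spreading_set_subset_closed[OF S diamond_end_complement_closed] U diamonds t by blast
    moreover obtain w where "w \<in> ?U" "w \<noteq> t" by (rule unit_other_vertex[OF U(1)])
    ultimately show False using units_subset_V[OF U(1)] by blast
  next
    case False
    hence "\<forall>s\<in>S. nbrs E s \<subseteq> unit_of s" by (auto simp: nbrs_def)
    hence "V \<subseteq> S" using spreading_set_subset_closed[OF S one_per_unit_closed] one by blast
    moreover obtain v where v: "v \<in> V" using V_nonempty by blast
    moreover obtain w where "w \<in> unit_of v" "w \<noteq> v" by (rule unit_other_vertex[OF unit_of_in_units[OF v]])
    ultimately show False
      using one unit_of_in_units[OF v] in_unit_of[OF v] unit_of_subset_V[OF v] by blast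
  qed
qed

lemma spread_closed_fills_unit_of_nbr:
  assumes C: "spread_closed C" and centres: "\<forall>U\<in>units. \<exists>c\<in>U \<inter> C. nbrs E c \<subseteq> U"
    and ab: "a \<in> C" "E a b" "b \<notin> unit_of a"
  shows "unit_of b \<subseteq> C"
proof -
  have b: "b \<in> V" using ab adj_in_V2 by blast
  obtain c where c: "c \<in> unit_of b" "c \<in> C" "nbrs E c \<subseteq> unit_of b"
    using centres unit_of_in_units[OF b] by blast
  have "a \<notin> unit_of b" using not_in_unit_of_sym[OF ab(2,3)] .
  moreover from this have "b \<noteq> c" using c(3) adj_sym[OF ab(2)] by (auto simp: nbrs_def)
  ultimately show ?thesis
    using spread_closed_fills_unit[OF C unit_of_in_units[OF b] c(1,2) c(3) in_unit_of[OF b]]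
      adj_sym[OF ab(2)] ab(1) by blast
qed

lemma V_subset_spread_closed_with_centres:
  assumes C: "spread_closed C" and centres: "\<forall>U\<in>units. \<exists>c\<in>U \<inter> C. nbrs E c \<subseteq> U"
    and e: "e \<in> C" "E e e'" "e' \<notin> unit_of e"
  shows "V \<subseteq> C"
proof -
  have "V \<subseteq> {v \<in> V. unit_of v \<subseteq> C}"
  proof (rule V_subset_adj_closed)
    fix a b assume a: "a \<in> {v \<in> V. unit_of v \<subseteq> C}" and ab: "E a b"
    show "b \<in> {v \<in> V. unit_of v \<subseteq> C}"
    proof (cases "b \<in> unit_of a")
      case True thus ?thesis using a unit_of_member adj_in_V2[OF ab] by auto
    next
      case False
      thus ?thesis using spread_closed_fills_unit_of_nbr[OF C centres _ ab] a in_unit_of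
        adj_in_V2[OF ab] by blast
    qed
  qed (use spread_closed_fills_unit_of_nbr[OF C centres e] adj_in_V2[OF e(2)] in auto)
  thus ?thesis using in_unit_of by blast
qed

lemma all_diamonds_spreading_set_upper_bound:
  assumes diamonds: "\<forall>U\<in>units. is_diamond E U"
  obtains S where "spreading_set V E 2 3 S" "card S = card units + 1"
proof -
  have "\<forall>U\<in>units. \<exists>c. c \<in> U \<and> nbrs E c \<subseteq> U"
    using diamond_unit_centre diamonds by metis
  from bchoice[OF this] obtain centre where centre: "\<And>U. U \<in> units \<Longrightarrow> centre U \<in> U \<and> nbrs E (centre U) \<subseteq> U"
    by blast
  obtain v0 where v0: "v0 \<in> V" using V_nonempty by blast
  let ?U0 = "unit_of v0"
  obtain e0 e0' where e0: "e0 \<in> ?U0" "E e0 e0'" "e0' \<notin> ?U0"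
    using diamond_unit_end unit_of_in_units[OF v0] diamonds by metis
  let ?S = "insert e0 (centre ` units)"
  have "inj_on centre units" using centre units_eq by (metis inj_onI)
  moreover have "e0 \<notin> centre ` units"
  proof
    assume "e0 \<in> centre ` units"
    then obtain U where "U \<in> units" "e0 = centre U" by blast
    hence "U = ?U0" using centre units_eq unit_of_in_units[OF v0] e0(1) by metis
    thus False using centre[of ?U0] \<open>e0 = centre U\<close> e0 unit_of_in_units[OF v0] by (auto simp: nbrs_def)
  qed
  ultimately have "card ?S = card units + 1" using finite_units by (simp add: card_image)
  moreover have "spreading_set V E 2 3 ?S"
  proof (rule spreading_setI)
    show "?S \<subseteq> V" using centre units_subset_V e0(1) unit_of_subset_V[OF v0] by blast
    fix C assume C: "spread_closed C" "?S \<subseteq> C"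
    have "\<forall>U\<in>units. \<exists>c\<in>U \<inter> C. nbrs E c \<subseteq> U" using centre C(2) by blast
    moreover have "e0' \<notin> unit_of e0" using unit_of_member[OF v0 e0(1)] e0(3) by simp
    ultimately show "V \<subseteq> C" using V_subset_spread_closed_with_centres[OF C(1)] C(2) e0(2) by blast
  qed
  ultimately show ?thesis using that by blast
qed

section \<open>Bridges leaving triangle units\<close>

text \<open>\<open>beyond u v\<close> is the set of vertices reachable from \<open>v\<close> once the edge \<open>u v\<close> is deleted;
  the edge is a bridge iff \<open>u \<notin> beyond u v\<close>.\<close>

definition adj_without :: "'a \<Rightarrow> 'a \<Rightarrow> 'a \<Rightarrow> 'a \<Rightarrow> bool" where
  "adj_without u v a b \<longleftrightarrow> E a b \<and> \<not> ((a = u \<and> b = v) \<or> (a = v \<and> b = u))"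

definition beyond :: "'a \<Rightarrow> 'a \<Rightarrow> 'a set" where
  "beyond u v = {y. (adj_without u v)\<^sup>*\<^sup>* v y}"

lemma beyond_step: "y \<in> beyond u v \<Longrightarrow> adj_without u v y z \<Longrightarrow> z \<in> beyond u v"
  by (auto simp: beyond_def intro: rtranclp.rtrancl_into_rtrancl)

lemma beyond_subset_V: "v \<in> V \<Longrightarrow> beyond u v \<subseteq> V"
proof
  fix y assume "v \<in> V" "y \<in> beyond u v"
  hence "(adj_without u v)\<^sup>*\<^sup>* v y" "v \<in> V" by (simp_all add: beyond_def)
  thus "y \<in> V" by (induction rule: rtranclp_induct) (auto simp: adj_without_def dest: adj_in_V2)
qed

lemma finite_beyond: "v \<in> V \<Longrightarrow> finite (beyond u v)"
  using beyond_subset_V finite_V finite_subset by blast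

lemma unit_connected:
  assumes U: "U \<in> units" and vy: "v \<in> U" "y \<in> U"
  shows "(\<lambda>a b. E a b \<and> a \<in> U \<and> b \<in> U)\<^sup>*\<^sup>* v y"
proof (cases "v = y \<or> E v y")
  case True thus ?thesis using vy by (metis (mono_tags, lifting) r_into_rtranclp rtranclp.rtrancl_refl)
next
  case False
  show ?thesis
  proof (cases "is_diamond E U")
    case False
    then obtain a b c where T: "U = {a,b,c}" "a \<noteq> b" "a \<noteq> c" "b \<noteq> c" "E a b" "E a c" "E b c"
      using triangle_unitE[OF U] by blast
    have "E b a" "E c a" "E c b" using T adj_sym by auto
    thus ?thesis using \<open>\<not> (v = y \<or> E v y)\<close> T vy by auto
  next
    case True
    then obtain a b c d where D: "U = {a,b,c,d}" "a \<noteq> b" "a \<noteq> c" "a \<noteq> d" "b \<noteq> c" "b \<noteq> d" "c \<noteq> d"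
      "\<not> E a b" "E a c" "E a d" "E b c" "E b d" "E c d"
      by (rule is_diamondE)
    have sy: "E c a" "E d a" "E c b" "E d b" "E d c" using D adj_sym by auto
    have "(v = a \<and> y = b) \<or> (v = b \<and> y = a)" using \<open>\<not> (v = y \<or> E v y)\<close> D sy vy by auto
    thus ?thesis
    proof
      assume "v = a \<and> y = b"
      thus ?thesis using D sy
        by (metis (mono_tags, lifting) insertCI converse_rtranclp_into_rtranclp r_into_rtranclp)
    next
      assume "v = b \<and> y = a"
      thus ?thesis using D sy
        by (metis (mono_tags, lifting) insertCI converse_rtranclp_into_rtranclp r_into_rtranclp)
    qed
  qed
qed

lemma unit_connected_without:
  assumes "U \<in> units" "v \<in> U" "y \<in> U" "u0 \<notin> U \<or> v0 \<notin> U"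
  shows "(adj_without u0 v0)\<^sup>*\<^sup>* v y"
proof -
  have "(\<lambda>a b. E a b \<and> a \<in> U \<and> b \<in> U) \<le> adj_without u0 v0"
    using assms(4) by (auto simp: adj_without_def)
  thus ?thesis using unit_connected[OF assms(1-3)] rtranclp_mono by blast
qed

lemma unit_of_subset_beyond:
  assumes "E u v" "u \<notin> unit_of v"
  shows "unit_of v \<subseteq> beyond u v"
proof
  fix y assume "y \<in> unit_of v"
  moreover have "unit_of v \<in> units" "v \<in> unit_of v"
    using assms(1) adj_in_V2 unit_of_in_units in_unit_of by auto
  ultimately show "y \<in> beyond u v"
    using unit_connected_without[of "unit_of v" v y u v] assms(2) by (simp add: beyond_def)
qed

lemma exit_in_beyond:
  assumes "E u v" "u \<notin> unit_of v" "w \<in> unit_of v" "w \<noteq> v" "E w w'"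
  shows "w' \<in> beyond u v"
  using beyond_step[OF subsetD[OF unit_of_subset_beyond[OF assms(1,2)] assms(3)]] assms
  by (auto simp: adj_without_def)

lemma diamond_two_exits:
  assumes U: "U \<in> units" "is_diamond E U" and v: "v \<in> U" "E v v'" "v' \<notin> U"
    and w: "w \<in> U" "E w w'" "w' \<notin> U" "v \<noteq> w" and z: "z \<in> U" "E z z'" "z' \<notin> U"
  shows "z = v \<or> z = w"
proof -
  obtain a b c d where D: "U = {a,b,c,d}" "nbrs E c = {a,b,d}" "nbrs E d = {a,b,c}"
    using diamond_unitE[OF U] by metis
  have "x = a \<or> x = b" if "x \<in> U" "E x y" "y \<notin> U" for x y
  proof -
    have "y \<in> nbrs E x" using that by (simp add: nbrs_def)
    thus ?thesis using D that by auto
  qed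
  thus ?thesis using v w z by metis
qed

lemma diamond_other_exit:
  assumes U: "U \<in> units" "is_diamond E U" and v: "v \<in> U" "E v v'" "v' \<notin> U"
  obtains w w' where "w \<in> U" "w \<noteq> v" "E w w'" "w' \<notin> U"
proof -
  obtain a b c d a' b' where D: "U = {a,b,c,d}" "a \<noteq> b" "a \<noteq> c" "a \<noteq> d" "b \<noteq> c" "b \<noteq> d" "c \<noteq> d"
    "nbrs E c = {a,b,d}" "nbrs E d = {a,b,c}" "nbrs E a = {c,d,a'}" "nbrs E b = {c,d,b'}" "a' \<notin> U" "b' \<notin> U"
    using diamond_unitE[OF U] by metis
  have "v' \<in> nbrs E v" using v by (simp add: nbrs_def)
  hence "v = a \<or> v = b" using D v by auto
  moreover have "E a a'" "E b b'" using D by (auto simp: nbrs_def set_eq_iff)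
  ultimately show ?thesis using that D by auto
qed

lemma beyond_shrinks:
  assumes uv: "E u v" "u \<notin> unit_of v" "u \<notin> beyond u v"
    and w: "w \<in> unit_of v" "w \<noteq> v" "E w w'" "w' \<notin> unit_of v" "w \<notin> beyond w w'"
  shows "beyond w w' \<subset> beyond u v"
proof -
  let ?W = "unit_of v"
  have W: "?W \<in> units" "v \<in> ?W" using uv(1) adj_in_V2 unit_of_in_units in_unit_of by auto
  have W_beyond: "y \<in> beyond u v" if "y \<in> ?W" for y
    using unit_of_subset_beyond[OF uv(1,2)] that by blast
  have w'_beyond: "w' \<in> beyond u v" using exit_in_beyond[OF uv(1,2) w(1-3)] .
  have W_not_beyond: "y \<notin> beyond w w'" if "y \<in> ?W" for y
  proof
    assume "y \<in> beyond w w'"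
    moreover have "(adj_without w w')\<^sup>*\<^sup>* y w"
      using unit_connected_without[OF W(1) that w(1), of w w'] w(4) by blast
    ultimately have "w \<in> beyond w w'" by (auto simp: beyond_def intro: rtranclp_trans)
    thus False using w(5) by contradiction
  qed
  have u_not_beyond: "u \<notin> beyond w w'"
    using beyond_step[of u w w' v] W_not_beyond[OF W(2)] uv w W(2) by (auto simp: adj_without_def)
  have "y \<in> beyond u v" if "(adj_without w w')\<^sup>*\<^sup>* w' y" for y
    using that
  proof (induction rule: rtranclp_induct)
    case base thus ?case using w'_beyond by simp
  next
    case (step y z)
    have "y \<noteq> u" "y \<noteq> v" using step(1) u_not_beyond W_not_beyond W(2) by (auto simp: beyond_def)
    hence "adj_without u v y z" using step(2) by (auto simp: adj_without_def)
    thus ?case using beyond_step step(3) by blast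
  qed
  hence "beyond w w' \<subseteq> beyond u v" by (auto simp: beyond_def)
  moreover have "v \<in> beyond u v" "v \<notin> beyond w w'" using W_beyond W_not_beyond W by auto
  ultimately show ?thesis by blast
qed

text \<open>A path from \<open>w'\<close> back into the diamond avoiding \<open>w w'\<close> would have to enter it through the
  other exit \<open>v u\<close>.\<close>

lemma diamond_exit_bridge:
  assumes uv: "E u v" "u \<notin> unit_of v" "u \<notin> beyond u v" and dia: "is_diamond E (unit_of v)"
    and w: "w \<in> unit_of v" "w \<noteq> v" "E w w'" "w' \<notin> unit_of v"
  shows "w \<notin> beyond w w'"
proof -
  let ?W = "unit_of v"
  have W: "?W \<in> units" "v \<in> ?W" using uv(1) adj_in_V2 unit_of_in_units in_unit_of by auto
  have vu: "E v u" using uv adj_sym by blast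
  have w'_beyond: "w' \<in> beyond u v" using exit_in_beyond[OF uv(1,2) w(1-3)] .
  have "y \<in> beyond u v \<and> y \<notin> ?W" if "(adj_without w w')\<^sup>*\<^sup>* w' y" for y
    using that
  proof (induction rule: rtranclp_induct)
    case base thus ?case using w'_beyond w by simp
  next
    case (step y z)
    have "y \<noteq> u" using step(3) uv(3) by blast
    moreover have "y \<noteq> v" using step(3) W by blast
    ultimately have "adj_without u v y z" using step(2) by (auto simp: adj_without_def)
    hence z_beyond: "z \<in> beyond u v" using beyond_step step(3) by blast
    have "z \<notin> ?W"
    proof
      assume zW: "z \<in> ?W"
      have zy: "E z y" using step(2) adj_sym by (auto simp: adj_without_def)
      hence "z = v \<or> z = w"
        using diamond_two_exits[OF W(1) dia W(2) vu uv(2) w(1,3,4) w(2)[symmetric] zW zy] step(3) by blast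
      thus False
      proof
        assume "z = v"
        hence "y = u" using units_one_outside_nbr[OF W(1) W(2) vu, of y] zy step(3) uv(2) by blast
        thus False using \<open>y \<noteq> u\<close> by blast
      next
        assume "z = w"
        hence "y = w'" using units_one_outside_nbr[OF W(1) w(1) w(3), of y] zy step(3) w(4) by blast
        thus False using step(2) \<open>z = w\<close> by (auto simp: adj_without_def)
      qed
    qed
    thus ?case using z_beyond by blast
  qed
  thus ?thesis using w(1) by (auto simp: beyond_def)
qed

text \<open>If every exit of a triangle unit were a bridge, every bridge \<open>u v\<close> into a unit would be
  followed by a bridge leaving that unit elsewhere (by assumption for a triangle, by
  \<open>diamond_exit_bridge\<close> for a diamond) with strictly fewer vertices beyond it.\<close>

lemma bridge_exit_descent:
  assumes triangle_bridges: "\<And>x x'. x \<in> V \<Longrightarrow> \<not> is_diamond E (unit_of x) \<Longrightarrow> E x x' \<Longrightarrow>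
      x' \<notin> unit_of x \<Longrightarrow> x \<notin> beyond x x'"
  shows "E u v \<Longrightarrow> u \<notin> unit_of v \<Longrightarrow> u \<notin> beyond u v \<Longrightarrow> False"
proof (induction "card (beyond u v)" arbitrary: u v rule: less_induct)
  case less
  have v: "v \<in> V" using less adj_in_V2 by blast
  let ?W = "unit_of v"
  have W: "?W \<in> units" "v \<in> ?W" using unit_of_in_units[OF v] in_unit_of[OF v] by auto
  obtain w w' where w: "w \<in> ?W" "w \<noteq> v" "E w w'" "w' \<notin> ?W" "w \<notin> beyond w w'"
  proof (cases "is_diamond E ?W")
    case False
    obtain w where w: "w \<in> ?W" "w \<noteq> v" by (rule unit_other_vertex[OF W(1)])
    obtain w' where w': "E w w'" "w' \<notin> ?W" using triangle_unit_outside_nbr[OF W(1) False w(1)] by blast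
    have "w \<in> V" "unit_of w = ?W" using w(1) units_subset_V[OF W(1)] unit_of_eq[OF W(1)] by auto
    hence "w \<notin> beyond w w'" using triangle_bridges w'(1) False w'(2) by simp
    thus ?thesis using that w w' by blast
  next
    case True
    have vu: "E v u" using less adj_sym by blast
    obtain x x' where "x \<in> ?W" "x \<noteq> v" "E x x'" "x' \<notin> ?W"
      using diamond_other_exit[OF W(1) True W(2) vu less(3)] by blast
    thus ?thesis using that diamond_exit_bridge[OF less(2,3,4) True] by blast
  qed
  have "card (beyond w w') < card (beyond u v)"
    using psubset_card_mono[OF finite_beyond[OF v] beyond_shrinks[OF less(2,3,4) w]] .
  moreover have "w \<in> V" "unit_of w = ?W" using w(1) units_subset_V[OF W(1)] unit_of_eq[OF W(1)] by auto
  hence "w \<notin> unit_of w'" using not_in_unit_of_sym[OF w(3)] w(4) by simp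
  ultimately show False using less(1)[of w w'] w(3) w(5) by blast
qed

lemma exists_non_bridge_triangle_exit:
  assumes "\<not> (\<forall>U\<in>units. is_diamond E U)"
  obtains x x' where "x \<in> V" "\<not> is_diamond E (unit_of x)" "E x x'" "x' \<notin> unit_of x" "x \<in> beyond x x'"
proof (rule ccontr)
  assume no_such: "\<not> thesis"
  obtain U where U: "U \<in> units" "\<not> is_diamond E U" using assms by blast
  obtain x where x: "x \<in> U" using unit_nonempty[OF U(1)] by blast
  obtain x' where x': "E x x'" "x' \<notin> U" using triangle_unit_outside_nbr[OF U x] by blast
  have "x \<in> V" "unit_of x = U" using x units_subset_V[OF U(1)] unit_of_eq[OF U(1)] by auto
  moreover from this have "x \<notin> unit_of x'" using not_in_unit_of_sym x' by simp
  ultimately show False using bridge_exit_descent[of x x'] no_such that U x' by metis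
qed

lemma non_bridge_beyond_V:
  assumes "E x x'" "x \<in> beyond x x'" "v \<in> V"
  shows "v \<in> beyond x x'"
proof -
  have "v \<in> {y. (adj_without x x')\<^sup>*\<^sup>* x' y}"
  proof (rule V_subset_adj_closed[of x', THEN subsetD])
    fix a b assume "a \<in> {y. (adj_without x x')\<^sup>*\<^sup>* x' y}" "E a b"
    thus "b \<in> {y. (adj_without x x')\<^sup>*\<^sup>* x' y}"
      using assms(2) beyond_step[of a x x' b] by (cases "adj_without x x' a b")
        (auto simp: beyond_def adj_without_def)
  qed (use assms adj_in_V2 in auto)
  thus ?thesis by (simp add: beyond_def)
qed

end

section \<open>Spreading when some unit is a triangle\<close>

lemma rtranclp_rank:
  assumes "\<And>v. v \<in> A \<Longrightarrow> R\<^sup>*\<^sup>* x v"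
  shows "\<exists>d :: 'a \<Rightarrow> nat. \<forall>v\<in>A. v \<noteq> x \<longrightarrow> (\<exists>q. d q < d v \<and> R q v)"
proof -
  define d where "d v = (LEAST n. (R ^^ n) x v)" for v
  have "\<exists>q. d q < d v \<and> R q v" if v: "v \<in> A" "v \<noteq> x" for v
  proof -
    have "\<exists>n. (R ^^ n) x v" using assms[OF v(1)] by (simp add: rtranclp_power)
    hence dv: "(R ^^ d v) x v" unfolding d_def by (rule LeastI_ex)
    have "d v \<noteq> 0"
    proof
      assume "d v = 0"
      thus False using dv v(2) by simp
    qed
    then obtain m where m: "d v = Suc m" using not0_implies_Suc by blast
    then obtain q where q: "(R ^^ m) x q" "R q v" using dv relpowp_Suc_E by metis
    have "d q \<le> m" unfolding d_def using q(1) by (rule Least_le)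
    thus ?thesis using m q(2) by (intro exI[of _ q]) simp
  qed
  thus ?thesis by blast
qed

context claw_free_cubic_graph
begin

lemma spread_closed_fills_units_by_rank:
  fixes rank :: "'a set \<Rightarrow> nat"
  assumes C: "spread_closed C"
    and seed: "\<And>U. U \<in> units \<Longrightarrow> s U \<in> U \<inter> C \<and> (is_diamond E U \<longrightarrow> nbrs E (s U) \<subseteq> U)"
    and entry: "\<And>U. U \<in> units \<Longrightarrow>
      \<exists>p\<in>U. p \<noteq> s U \<and> (\<exists>q. E p q \<and> q \<notin> U \<and> (q \<in> C \<or> rank (unit_of q) < rank U))"
  shows "V \<subseteq> C"
proof -
  have units_C: "U \<subseteq> C" if "U \<in> units" for U
    using that
  proof (induction "rank U" arbitrary: U rule: less_induct)
    case less
    obtain p q where p: "p \<in> U" "p \<noteq> s U" "E p q" "q \<notin> U"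
      and q: "q \<in> C \<or> rank (unit_of q) < rank U"
      using entry[OF less.prems] by blast
    have "q \<in> C"
    proof (cases "q \<in> C")
      case False
      have qV: "q \<in> V" using adj_in_V2[OF p(3)] .
      have "unit_of q \<subseteq> C" using less.hyps[OF _ unit_of_in_units[OF qV]] q False by blast
      thus ?thesis using in_unit_of[OF qV] by blast
    qed simp
    moreover have "s U \<in> U" "s U \<in> C" "is_diamond E U \<Longrightarrow> nbrs E (s U) \<subseteq> U"
      using seed[OF less.prems] by auto
    ultimately show ?case using spread_closed_fills_unit[OF C less.prems _ _ _ p] by simp
  qed
  show ?thesis
  proof
    fix v assume "v \<in> V"
    thus "v \<in> C" using units_C[OF unit_of_in_units] in_unit_of by blast
  qed
qed

lemma seeds_avoiding:
  assumes x0: "x0 \<in> V" "\<not> is_diamond E (unit_of x0)" "p (unit_of x0) \<noteq> x0"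
  obtains s where "\<And>U. U \<in> units \<Longrightarrow> s U \<in> U"
    "\<And>U. U \<in> units \<Longrightarrow> is_diamond E U \<Longrightarrow> nbrs E (s U) \<subseteq> U"
    "\<And>U. U \<in> units \<Longrightarrow> \<not> is_diamond E U \<Longrightarrow> s U \<noteq> p U"
    "s (unit_of x0) = x0"
proof -
  have "\<forall>U\<in>units. \<exists>c. c \<in> U \<and> (is_diamond E U \<longrightarrow> nbrs E c \<subseteq> U)
      \<and> (\<not> is_diamond E U \<longrightarrow> c \<noteq> p U) \<and> (U = unit_of x0 \<longrightarrow> c = x0)"
  proof
    fix U assume U: "U \<in> units"
    show "\<exists>c. c \<in> U \<and> (is_diamond E U \<longrightarrow> nbrs E c \<subseteq> U)
      \<and> (\<not> is_diamond E U \<longrightarrow> c \<noteq> p U) \<and> (U = unit_of x0 \<longrightarrow> c = x0)"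
    proof (cases "is_diamond E U")
      case True
      obtain c where "c \<in> U" "nbrs E c \<subseteq> U" using diamond_unit_centre[OF U True] by blast
      moreover have "U \<noteq> unit_of x0" using True x0(2) by blast
      ultimately show ?thesis using True by (intro exI[of _ c]) simp
    next
      case False
      show ?thesis
      proof (cases "U = unit_of x0")
        case True
        thus ?thesis using x0 in_unit_of[OF x0(1)] by (intro exI[of _ x0]) simp
      next
        case False
        obtain c where "c \<in> U" "c \<noteq> p U" by (rule unit_other_vertex[OF U])
        thus ?thesis using False \<open>\<not> is_diamond E U\<close> by (intro exI[of _ c]) simp
      qed
    qed
  qed
  from bchoice[OF this] obtain s where s: "\<forall>U\<in>units. s U \<in> U \<and> (is_diamond E U \<longrightarrow> nbrs E (s U) \<subseteq> U)
      \<and> (\<not> is_diamond E U \<longrightarrow> s U \<noteq> p U) \<and> (U = unit_of x0 \<longrightarrow> s U = x0)"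
    by blast
  show ?thesis by (rule that[of s]) (use s unit_of_in_units[OF x0(1)] in auto)
qed

text \<open>In the application \<open>x0 x'\<close> is an exit of a triangle unit that is not a bridge and
  \<open>rank\<close> is the distance from \<open>x'\<close> in \<open>G - x0 x'\<close>.\<close>

context
  fixes x0 x' :: 'a and rank :: "'a \<Rightarrow> nat" and lowest :: "'a set \<Rightarrow> 'a"
  assumes exit: "x0 \<in> V" "E x0 x'" "x' \<notin> unit_of x0"
    and rank: "\<forall>v\<in>V. v \<noteq> x' \<longrightarrow> (\<exists>q. rank q < rank v \<and> adj_without x0 x' q v)"
    and lowest: "\<forall>U\<in>units. lowest U \<in> U \<and> (\<forall>y\<in>U. rank (lowest U) \<le> rank y)"
begin

lemma lowest_unit_of_exit_neq: "lowest (unit_of x0) \<noteq> x0"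
proof
  let ?T0 = "unit_of x0"
  assume low: "lowest ?T0 = x0"
  obtain q where q: "rank q < rank x0" "adj_without x0 x' q x0"
    using rank[rule_format, OF exit(1)] adj_neq[OF exit(2)] by blast
  hence "E x0 q" "q \<noteq> x'" using adj_sym by (auto simp: adj_without_def)
  hence "q \<in> ?T0"
    using units_one_outside_nbr[OF unit_of_in_units[OF exit(1)] in_unit_of[OF exit(1)] _ exit(2)] exit(3)
    by blast
  hence "rank x0 \<le> rank q" using lowest[rule_format, OF unit_of_in_units[OF exit(1)]] low by simp
  thus False using q(1) by simp
qed

lemma lowest_entered:
  assumes U: "U \<in> units"
  obtains q where "E (lowest U) q" "q \<notin> U" "q = x0 \<or> rank (lowest (unit_of q)) < rank (lowest U)"
proof (cases "lowest U = x'")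
  case True
  have "x0 \<notin> U"
  proof
    assume "x0 \<in> U"
    hence "U = unit_of x0" using unit_of_eq[OF U] by simp
    thus False using lowest[rule_format, OF U] True exit(3) by simp
  qed
  moreover have "E (lowest U) x0" using True adj_sym[OF exit(2)] by simp
  ultimately show ?thesis using that by blast
next
  case False
  have "lowest U \<in> V" using lowest[rule_format, OF U] units_subset_V[OF U] by blast
  then obtain q where q: "rank q < rank (lowest U)" "adj_without x0 x' q (lowest U)"
    using rank False by blast
  hence "E (lowest U) q" using adj_sym by (auto simp: adj_without_def)
  moreover have "q \<notin> U" using lowest[rule_format, OF U] q(1) leD by blast
  moreover have "rank (lowest (unit_of q)) \<le> rank q"
    using lowest[rule_format, OF unit_of_in_units] in_unit_of adj_in_V2[OF \<open>E (lowest U) q\<close>] by blast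
  hence "rank (lowest (unit_of q)) < rank (lowest U)" using q(1) by simp
  ultimately show ?thesis using that by blast
qed

end

lemma non_bridge_exit_ranking:
  assumes "E x0 x'" "x0 \<in> beyond x0 x'"
  obtains rank :: "'a \<Rightarrow> nat" and lowest :: "'a set \<Rightarrow> 'a"
  where "\<forall>v\<in>V. v \<noteq> x' \<longrightarrow> (\<exists>q. rank q < rank v \<and> adj_without x0 x' q v)"
    and "\<forall>U\<in>units. lowest U \<in> U \<and> (\<forall>y\<in>U. rank (lowest U) \<le> rank y)"
proof -
  have "(adj_without x0 x')\<^sup>*\<^sup>* x' v" if "v \<in> V" for v
    using non_bridge_beyond_V[OF assms that] by (simp add: beyond_def)
  then obtain rank :: "'a \<Rightarrow> nat"
    where rank: "\<forall>v\<in>V. v \<noteq> x' \<longrightarrow> (\<exists>q. rank q < rank v \<and> adj_without x0 x' q v)"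
    using rtranclp_rank[of V "adj_without x0 x'" x'] by blast
  have "\<forall>U\<in>units. \<exists>p. p \<in> U \<and> (\<forall>y\<in>U. rank p \<le> rank y)"
  proof
    fix U assume "U \<in> units"
    then obtain u where "u \<in> U" using unit_nonempty by blast
    thus "\<exists>p. p \<in> U \<and> (\<forall>y\<in>U. rank p \<le> rank y)" using ex_has_least_nat[of "\<lambda>p. p \<in> U" u rank] by blast
  qed
  from bchoice[OF this] obtain lowest
    where "\<forall>U\<in>units. lowest U \<in> U \<and> (\<forall>y\<in>U. rank (lowest U) \<le> rank y)"
    by blast
  thus ?thesis using that rank by blast
qed

lemma not_all_diamonds_spreading_set_upper_bound:
  assumes "\<not> (\<forall>U\<in>units. is_diamond E U)"
  obtains S where "spreading_set V E 2 3 S" "card S = card units"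
proof -
  obtain x0 x' where x0: "x0 \<in> V" "\<not> is_diamond E (unit_of x0)" "E x0 x'" "x' \<notin> unit_of x0"
    "x0 \<in> beyond x0 x'"
    by (rule exists_non_bridge_triangle_exit[OF assms])
  obtain rank :: "'a \<Rightarrow> nat" and lowest :: "'a set \<Rightarrow> 'a"
    where rank: "\<forall>v\<in>V. v \<noteq> x' \<longrightarrow> (\<exists>q. rank q < rank v \<and> adj_without x0 x' q v)"
      and lowest: "\<forall>U\<in>units. lowest U \<in> U \<and> (\<forall>y\<in>U. rank (lowest U) \<le> rank y)"
    by (rule non_bridge_exit_ranking[OF x0(3,5)])
  note entered = lowest_entered[OF x0(1,3,4) rank lowest]
  obtain s where s: "\<And>U. U \<in> units \<Longrightarrow> s U \<in> U"
    "\<And>U. U \<in> units \<Longrightarrow> is_diamond E U \<Longrightarrow> nbrs E (s U) \<subseteq> U"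
    "\<And>U. U \<in> units \<Longrightarrow> \<not> is_diamond E U \<Longrightarrow> s U \<noteq> lowest U"
    "s (unit_of x0) = x0"
    by (rule seeds_avoiding[where p = lowest, OF x0(1,2) lowest_unit_of_exit_neq[OF x0(1,3,4) rank lowest]])
      (rule that)
  have "inj_on s units" by (rule inj_onI) (use s(1) units_eq in metis)
  hence "card (s ` units) = card units" by (rule card_image)
  moreover have "spreading_set V E 2 3 (s ` units)"
  proof (rule spreading_setI)
    show "s ` units \<subseteq> V" using s(1) units_subset_V by blast
    fix C assume C: "spread_closed C" "s ` units \<subseteq> C"
    have "s (unit_of x0) \<in> C" using C(2) unit_of_in_units[OF x0(1)] by blast
    hence "x0 \<in> C" using s(4) by simp
    show "V \<subseteq> C"
    proof (rule spread_closed_fills_units_by_rank[where rank = "\<lambda>U. rank (lowest U)"])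
      fix U assume U: "U \<in> units"
      show "s U \<in> U \<inter> C \<and> (is_diamond E U \<longrightarrow> nbrs E (s U) \<subseteq> U)" using s(1,2) C(2) U by blast
      obtain q where q: "E (lowest U) q" "q \<notin> U" "q = x0 \<or> rank (lowest (unit_of q)) < rank (lowest U)"
        by (rule entered[OF U])
      have "lowest U \<noteq> s U"
        using s(2,3)[OF U] q(1,2) by (cases "is_diamond E U") (auto simp: nbrs_def)
      thus "\<exists>p\<in>U. p \<noteq> s U \<and> (\<exists>q. E p q \<and> q \<notin> U \<and> (q \<in> C \<or> rank (lowest (unit_of q)) < rank (lowest U)))"
        using lowest U q \<open>x0 \<in> C\<close> by blast
    qed (use C(1) in blast)
  qed
  ultimately show ?thesis using that by blast
qed

end

section \<open>Diamond necklaces\<close>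

lemma Suc_mod_neq:
  assumes "2 \<le> (k::nat)" "i < k"
  shows "Suc i mod k \<noteq> i"
  using assms by (cases "Suc i = k") auto

context claw_free_cubic_graph
begin

lemma necklace_diamond:
  assumes iso: "graph_iso V E (necklace_V k) (necklace_E k)" and k: "2 \<le> k" and v: "v \<in> V"
  obtains D where "is_diamond E D" "v \<in> D" "D \<subseteq> V"
proof -
  obtain f where f: "bij_betw f V (necklace_V k)" "\<forall>x\<in>V. \<forall>y\<in>V. E x y \<longleftrightarrow> necklace_E k (f x) (f y)"
    using iso unfolding graph_iso_def by blast
  define g where "g = inv_into V f"
  have g: "bij_betw g (necklace_V k) V" using f(1) bij_betw_inv_into g_def by blast
  have fg: "f (g x) = x" if "x \<in> necklace_V k" for x
    using f(1) that g_def by (simp add: bij_betw_inv_into_right)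
  have gf: "g (f x) = x" if "x \<in> V" for x
    using f(1) that g_def by (simp add: bij_betw_inv_into_left)
  have gV: "g x \<in> V" if "x \<in> necklace_V k" for x using g that bij_betwE by blast
  have g_adj: "E (g x) (g y) \<longleftrightarrow> necklace_E k x y" if "x \<in> necklace_V k" "y \<in> necklace_V k" for x y
    using f(2) gV[OF that(1)] gV[OF that(2)] fg that by metis
  have g_inj: "g x = g y \<Longrightarrow> x \<in> necklace_V k \<Longrightarrow> y \<in> necklace_V k \<Longrightarrow> x = y" for x y
    using g unfolding bij_betw_def inj_on_def by blast
  obtain i j where ij: "f v = (i,j)" by fastforce
  have i: "i < k" "j < 4" using f(1) v ij bij_betwE unfolding necklace_V_def by fastforce+
  have inN: "(i,0) \<in> necklace_V k" "(i,1) \<in> necklace_V k" "(i,2) \<in> necklace_V k" "(i,3) \<in> necklace_V k"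
    using i by (auto simp: necklace_V_def)
  have "Suc i mod k \<noteq> i" using Suc_mod_neq k i by blast
  let ?D = "{g (i,0), g (i,1), g (i,2), g (i,3)}"
  have "\<not> E (g (i,0)) (g (i,1))" using g_adj[OF inN(1,2)] \<open>Suc i mod k \<noteq> i\<close> by (simp add: necklace_E_def)
  moreover have "E (g (i,0)) (g (i,2))" "E (g (i,0)) (g (i,3))" "E (g (i,1)) (g (i,2))"
    "E (g (i,1)) (g (i,3))" "E (g (i,2)) (g (i,3))"
    using g_adj inN by (auto simp: necklace_E_def)
  moreover have "distinct [g (i,0), g (i,1), g (i,2), g (i,3)]" using g_inj inN by fastforce
  ultimately have "is_diamond E ?D" unfolding is_diamond_def by blast
  moreover have "v \<in> ?D"
  proof -
    have "v = g (i,j)" using gf[OF v] ij by simp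
    thus ?thesis using i(2) by (auto simp: less_Suc_eq numeral_eq_Suc)
  qed
  moreover have "?D \<subseteq> V" using gV inN by blast
  ultimately show ?thesis using that by blast
qed

lemma necklace_all_diamonds:
  assumes "graph_iso V E (necklace_V k) (necklace_E k)" "2 \<le> k"
  shows "\<forall>U\<in>units. is_diamond E U"
proof
  fix U assume U: "U \<in> units"
  obtain v where v: "v \<in> U" using unit_nonempty[OF U] by blast
  obtain D where D: "is_diamond E D" "v \<in> D" "D \<subseteq> V"
    using necklace_diamond[OF assms] v units_subset_V[OF U] by blast
  hence "D \<in> units" by (simp add: units_def is_unit_def)
  hence "U = D" using units_eq[OF U _ v D(2)] by blast
  thus "is_diamond E U" using D by simp
qed

definition is_end :: "'a \<Rightarrow> bool" where
  "is_end x \<longleftrightarrow> x \<in> V \<and> (\<exists>y. E x y \<and> y \<notin> unit_of x)"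

text \<open>The following are meaningful only for ends of diamond units; elsewhere \<open>THE\<close> and \<open>SOME\<close>
  give unspecified values.\<close>

definition out_nbr :: "'a \<Rightarrow> 'a" where
  "out_nbr x = (THE y. E x y \<and> y \<notin> unit_of x)"

definition opposite :: "'a \<Rightarrow> 'a" where
  "opposite x = (THE y. y \<in> unit_of x \<and> y \<noteq> x \<and> \<not> E x y)"

definition centre1 :: "'a \<Rightarrow> 'a" where
  "centre1 x = (SOME y. y \<in> unit_of x \<and> E x y)"

definition centre2 :: "'a \<Rightarrow> 'a" where
  "centre2 x = (SOME y. y \<in> unit_of x \<and> E x y \<and> y \<noteq> centre1 x)"

lemma is_end_in_V: "is_end x \<Longrightarrow> x \<in> V"
  by (simp add: is_end_def)

lemma out_nbr:
  assumes "is_end x"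
  shows "E x (out_nbr x)" "out_nbr x \<notin> unit_of x" "\<And>y. E x y \<Longrightarrow> y \<notin> unit_of x \<Longrightarrow> y = out_nbr x"
proof -
  have x: "x \<in> V" using assms by (rule is_end_in_V)
  obtain y where y: "E x y" "y \<notin> unit_of x" using assms by (auto simp: is_end_def)
  have uniq: "\<And>z. E x z \<Longrightarrow> z \<notin> unit_of x \<Longrightarrow> z = y"
    using units_one_outside_nbr[OF unit_of_in_units[OF x] in_unit_of[OF x]] y by blast
  have "out_nbr x = y" unfolding out_nbr_def using y uniq by (intro the_equality) blast+
  thus "E x (out_nbr x)" "out_nbr x \<notin> unit_of x" using y by simp_all
  show "\<And>z. E x z \<Longrightarrow> z \<notin> unit_of x \<Longrightarrow> z = out_nbr x" using uniq \<open>out_nbr x = y\<close> by blast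
qed

lemma is_end_out_nbr:
  assumes "is_end x"
  shows "is_end (out_nbr x)" "out_nbr (out_nbr x) = x"
proof -
  have e: "E (out_nbr x) x" using out_nbr(1)[OF assms] adj_sym by blast
  have "x \<notin> unit_of (out_nbr x)" using not_in_unit_of_sym out_nbr(1,2)[OF assms] by blast
  thus "is_end (out_nbr x)" using e adj_in_V1 by (auto simp: is_end_def)
  thus "out_nbr (out_nbr x) = x"
    using out_nbr(3)[OF \<open>is_end (out_nbr x)\<close> e \<open>x \<notin> unit_of (out_nbr x)\<close>] by simp
qed

context
  assumes all_diamonds: "\<forall>U\<in>units. is_diamond E U"
begin

lemma end_unitE:
  assumes x: "is_end x"
  obtains b c d where "unit_of x = {x,b,c,d}" "x \<noteq> b" "x \<noteq> c" "x \<noteq> d" "b \<noteq> c" "b \<noteq> d" "c \<noteq> d"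
    "\<not> E x b" "E x c" "E x d" "E b c" "E b d" "E c d"
    "nbrs E c \<subseteq> unit_of x" "nbrs E d \<subseteq> unit_of x" "is_end b"
proof -
  have xV: "x \<in> V" using x by (rule is_end_in_V)
  have U: "unit_of x \<in> units" "x \<in> unit_of x" using unit_of_in_units[OF xV] in_unit_of[OF xV] by auto
  obtain a b c d a' b' where D: "unit_of x = {a,b,c,d}" "a \<noteq> b" "a \<noteq> c" "a \<noteq> d" "b \<noteq> c" "b \<noteq> d" "c \<noteq> d"
    "\<not> E a b" "E a c" "E a d" "E b c" "E b d" "E c d"
    "nbrs E c = {a,b,d}" "nbrs E d = {a,b,c}" "nbrs E a = {c,d,a'}" "nbrs E b = {c,d,b'}"
    "a' \<notin> unit_of x" "b' \<notin> unit_of x"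
    using diamond_unitE[OF U(1) all_diamonds[rule_format, OF U(1)]] by metis
  have "E a a'" "E b b'" using D(16,17) by (auto simp: nbrs_def set_eq_iff)
  moreover have "a \<in> V" "b \<in> V" "unit_of a = unit_of x" "unit_of b = unit_of x"
    using D(1) units_subset_V[OF U(1)] unit_of_member[OF xV] by auto
  ultimately have ends: "is_end a" "is_end b" using D(18,19) by (auto simp: is_end_def)
  obtain y where "E x y" "y \<notin> unit_of x" using x by (auto simp: is_end_def)
  hence "y \<in> nbrs E x" by (simp add: nbrs_def)
  hence "x \<noteq> c" "x \<noteq> d" using D \<open>y \<notin> unit_of x\<close> by auto
  hence "x = a \<or> x = b" using D U by auto
  thus ?thesis
  proof
    assume "x = a"
    show ?thesis by (rule that[of b c d]) (use D \<open>x = a\<close> ends in simp_all)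
  next
    assume "x = b"
    have "\<not> E b a" using D adj_sym by blast
    show ?thesis
      by (rule that[of a c d]) (use D \<open>x = b\<close> \<open>\<not> E b a\<close> ends in \<open>simp_all add: insert_commute\<close>)
  qed
qed

lemma opposite:
  assumes x: "is_end x"
  shows "opposite x \<in> unit_of x" "opposite x \<noteq> x" "\<not> E x (opposite x)" "is_end (opposite x)"
    "unit_of (opposite x) = unit_of x" "opposite (opposite x) = x"
    "\<And>y. is_end y \<Longrightarrow> y \<in> unit_of x \<Longrightarrow> y = x \<or> y = opposite x"
proof -
  have xV: "x \<in> V" using x by (rule is_end_in_V)
  obtain b c d where D: "unit_of x = {x,b,c,d}" "x \<noteq> b" "x \<noteq> c" "x \<noteq> d" "b \<noteq> c" "b \<noteq> d" "c \<noteq> d"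
    "\<not> E x b" "E x c" "E x d" "E b c" "E b d" "E c d"
    "nbrs E c \<subseteq> unit_of x" "nbrs E d \<subseteq> unit_of x" "is_end b"
    by (rule end_unitE[OF x])
  have ob: "opposite x = b" unfolding opposite_def
    by (rule the_equality) (use D in auto)
  show "opposite x \<in> unit_of x" "opposite x \<noteq> x" "\<not> E x (opposite x)" "is_end (opposite x)"
    using ob D by auto
  have ub: "unit_of b = unit_of x" using unit_of_member[OF xV] D(1) by simp
  thus "unit_of (opposite x) = unit_of x" using ob by simp
  have "\<not> E b x" using D(8) adj_sym by blast
  hence "opposite b = x" unfolding opposite_def ub
    by (intro the_equality) (use D in auto)
  thus "opposite (opposite x) = x" using ob by simp
  fix y assume y: "is_end y" "y \<in> unit_of x"
  then obtain z where z: "E y z" "z \<notin> unit_of y" by (auto simp: is_end_def)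
  have "unit_of y = unit_of x" using unit_of_member[OF xV y(2)] .
  hence "y \<noteq> c" "y \<noteq> d" using z D(14,15) by (auto simp: nbrs_def)
  thus "y = x \<or> y = opposite x" using y(2) D(1) ob by auto
qed

lemma centres:
  assumes x: "is_end x"
  shows "unit_of x = {x, opposite x, centre1 x, centre2 x}" "distinct [x, opposite x, centre1 x, centre2 x]"
    "E x (centre1 x)" "E x (centre2 x)" "E (opposite x) (centre1 x)" "E (opposite x) (centre2 x)"
    "E (centre1 x) (centre2 x)" "nbrs E (centre1 x) \<subseteq> unit_of x" "nbrs E (centre2 x) \<subseteq> unit_of x"
proof -
  obtain b c d where D: "unit_of x = {x,b,c,d}" "x \<noteq> b" "x \<noteq> c" "x \<noteq> d" "b \<noteq> c" "b \<noteq> d" "c \<noteq> d"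
    "\<not> E x b" "E x c" "E x d" "E b c" "E b d" "E c d"
    "nbrs E c \<subseteq> unit_of x" "nbrs E d \<subseteq> unit_of x" "is_end b"
    by (rule end_unitE[OF x])
  have ob: "opposite x = b" unfolding opposite_def
    by (rule the_equality) (use D in auto)
  have "\<exists>y. y \<in> unit_of x \<and> E x y" using D(1,9) by blast
  hence "centre1 x \<in> unit_of x \<and> E x (centre1 x)" unfolding centre1_def by (rule someI_ex)
  hence "centre1 x = c \<or> centre1 x = d" using D(1,8) adj_irrefl by auto
  moreover from this have "\<exists>y. y \<in> unit_of x \<and> E x y \<and> y \<noteq> centre1 x" using D(1,7,9,10) by blast
  hence "centre2 x \<in> unit_of x \<and> E x (centre2 x) \<and> centre2 x \<noteq> centre1 x"
    unfolding centre2_def by (rule someI_ex)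
  ultimately have "(centre1 x = c \<and> centre2 x = d) \<or> (centre1 x = d \<and> centre2 x = c)"
    using D(1,8) adj_irrefl by auto
  thus "unit_of x = {x, opposite x, centre1 x, centre2 x}" "distinct [x, opposite x, centre1 x, centre2 x]"
    "E x (centre1 x)" "E x (centre2 x)" "E (opposite x) (centre1 x)" "E (opposite x) (centre2 x)"
    "E (centre1 x) (centre2 x)" "nbrs E (centre1 x) \<subseteq> unit_of x" "nbrs E (centre2 x) \<subseteq> unit_of x"
    using D ob adj_sym[OF D(13)] by auto
qed

end

end

lemma less_4_cases: "(j::nat) < 4 \<Longrightarrow> j = 0 \<or> j = 1 \<or> j = 2 \<or> j = 3"
  by auto

locale diamond_chain = claw_free_cubic_graph +
  fixes e0 :: 'a
  assumes all_diamonds: "\<forall>U\<in>units. is_diamond E U" and end_e0: "is_end e0"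
begin

definition next_end :: "'a \<Rightarrow> 'a" where
  "next_end x = opposite (out_nbr x)"

definition chain :: "nat \<Rightarrow> 'a" where
  "chain n = (next_end ^^ n) e0"

lemmas opposite = opposite[OF all_diamonds] and centres = centres[OF all_diamonds]

lemma chain_0: "chain 0 = e0"
  by (simp add: chain_def)

lemma chain_Suc: "chain (Suc n) = next_end (chain n)"
  by (simp add: chain_def)

lemma is_end_next_end: "is_end x \<Longrightarrow> is_end (next_end x)"
  unfolding next_end_def using opposite(4) is_end_out_nbr(1) by blast

lemma is_end_chain: "is_end (chain n)"
  by (induction n) (auto simp: chain_0 chain_Suc end_e0 is_end_next_end)

lemma chain_in_V: "chain n \<in> V"
  using is_end_chain is_end_in_V by blast

lemma opposite_inj: "is_end x \<Longrightarrow> is_end y \<Longrightarrow> opposite x = opposite y \<Longrightarrow> x = y"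
  using opposite(6) by metis

lemma next_end_inj: "is_end x \<Longrightarrow> is_end y \<Longrightarrow> next_end x = next_end y \<Longrightarrow> x = y"
  unfolding next_end_def using opposite_inj is_end_out_nbr by metis

lemma opposite_next_end: "is_end x \<Longrightarrow> opposite (next_end x) = out_nbr x"
  unfolding next_end_def using opposite(6) is_end_out_nbr(1) by blast

lemma chain_shift: "chain (i + d) = chain i \<Longrightarrow> chain d = chain 0"
proof (induction i)
  case (Suc i)
  hence "next_end (chain (i + d)) = next_end (chain i)" by (simp add: chain_Suc)
  thus ?case using Suc(1) next_end_inj is_end_chain by blast
qed simp

lemma chain_returns: "\<exists>L>0. chain L = chain 0"
proof -
  have "\<not> inj_on chain {..card V}"
  proof
    assume "inj_on chain {..card V}"
    hence "card (chain ` {..card V}) = Suc (card V)" by (simp add: card_image)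
    moreover have "chain ` {..card V} \<subseteq> V" using chain_in_V by blast
    hence "card (chain ` {..card V}) \<le> card V" using finite_V card_mono by blast
    ultimately show False by simp
  qed
  then obtain i j where ij: "i < j" "chain i = chain j"
    unfolding inj_on_def by (metis linorder_neqE_nat)
  hence "chain (i + (j - i)) = chain i" by simp
  hence "chain (j - i) = chain 0" by (rule chain_shift)
  thus ?thesis using ij(1) by (intro exI[of _ "j - i"]) simp
qed

definition period :: nat where
  "period = (LEAST L. 0 < L \<and> chain L = chain 0)"

lemma period_pos: "0 < period" and chain_period: "chain period = chain 0"
  using LeastI_ex[OF chain_returns] unfolding period_def by auto

lemma chain_before_period: "0 < m \<Longrightarrow> m < period \<Longrightarrow> chain m \<noteq> chain 0"
  unfolding period_def using not_less_Least by blast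

lemma chain_add_period: "chain (n + period) = chain n"
  using chain_period by (simp add: chain_def funpow_add)

lemma chain_add_mult_period: "chain (n + q * period) = chain n"
  by (induction q) (simp, metis chain_add_period add.assoc add.commute mult_Suc)

lemma chain_mod_period: "chain n = chain (n mod period)"
  using chain_add_mult_period[of "n mod period" "n div period"] by simp

lemma chain_inj:
  assumes "i < period" "j < period" "chain i = chain j"
  shows "i = j"
proof (rule ccontr)
  assume "i \<noteq> j"
  moreover have "chain (min i j + (max i j - min i j)) = chain (min i j)"
    using assms(3) by (cases "i \<le> j") auto
  hence "chain (max i j - min i j) = chain 0" by (rule chain_shift)
  ultimately show False using chain_before_period[of "max i j - min i j"] assms(1,2) by auto
qed

lemma chain_add_neq_opposite: "chain (i + d) \<noteq> opposite (chain i)"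
proof (induction d arbitrary: i rule: less_induct)
  case (less d)
  show ?case
  proof (cases d)
    case 0 thus ?thesis using opposite(2)[OF is_end_chain[of i]] by simp
  next
    case (Suc d1)
    show ?thesis
    proof (cases d1)
      case 0
      show ?thesis
      proof
        assume "chain (i + d) = opposite (chain i)"
        hence "opposite (out_nbr (chain i)) = opposite (chain i)"
          using Suc 0 by (simp add: chain_Suc next_end_def)
        hence "out_nbr (chain i) = chain i" using opposite_inj is_end_out_nbr(1) is_end_chain by blast
        thus False using out_nbr(1)[OF is_end_chain] adj_irrefl by metis
      qed
    next
      case (Suc d2)
      show ?thesis
      proof
        assume h: "chain (i + d) = opposite (chain i)"
        have "chain (i + d) = next_end (chain (Suc i + d2))" using \<open>d = Suc d1\<close> Suc by (simp add: chain_Suc)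
        hence "opposite (out_nbr (chain (Suc i + d2))) = opposite (chain i)" using h by (simp add: next_end_def)
        hence "out_nbr (chain (Suc i + d2)) = chain i" using opposite_inj is_end_out_nbr(1) is_end_chain by blast
        hence "chain (Suc i + d2) = out_nbr (chain i)" using is_end_out_nbr(2)[OF is_end_chain] by metis
        also have "\<dots> = opposite (chain (Suc i))" using opposite_next_end[OF is_end_chain] by (simp add: chain_Suc)
        finally show False using less[of d2 "Suc i"] \<open>d = Suc d1\<close> Suc by simp
      qed
    qed
  qed
qed

lemma chain_neq_opposite: "chain j \<noteq> opposite (chain i)"
proof -
  have "chain j = chain (i + (j + i * period - i))"
    using chain_add_mult_period[of j i] period_pos by (simp add: trans_le_add2)
  thus ?thesis using chain_add_neq_opposite by metis
qed

lemma unit_of_chain_inj: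
  assumes "i < period" "j < period" "unit_of (chain i) = unit_of (chain j)"
  shows "i = j"
proof -
  have "chain j \<in> unit_of (chain i)" using assms(3) in_unit_of[OF chain_in_V] by simp
  hence "chain j = chain i \<or> chain j = opposite (chain i)"
    using opposite(7)[OF is_end_chain is_end_chain] by blast
  thus ?thesis using chain_neq_opposite chain_inj assms by metis
qed

lemma chain_out_nbr: "out_nbr (chain i) = opposite (chain (Suc i))"
  using opposite_next_end[OF is_end_chain] by (simp add: chain_Suc)

lemma out_nbr_opposite_chain: "\<exists>m. out_nbr (opposite (chain i)) = chain m"
proof -
  obtain m where m: "i + period = Suc m" using period_pos by (metis add_Suc_right gr0_conv_Suc)
  have "opposite (chain i) = out_nbr (chain m)" using chain_add_period chain_out_nbr m by metis
  thus ?thesis using is_end_out_nbr(2)[OF is_end_chain] by metis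
qed

lemma unit_of_chain_cover:
  assumes "v \<in> V"
  obtains i where "i < period" "v \<in> unit_of (chain i)"
proof -
  let ?M = "{v \<in> V. \<exists>n. v \<in> unit_of (chain n)}"
  have "V \<subseteq> ?M"
  proof (rule V_subset_adj_closed)
    have "e0 \<in> unit_of (chain 0)" "e0 \<in> V"
      using in_unit_of[OF chain_in_V[of 0]] chain_in_V[of 0] by (simp_all add: chain_0)
    thus "e0 \<in> ?M" "e0 \<in> V" by blast+
    fix x y assume x: "x \<in> ?M" and xy: "E x y"
    obtain n where n: "x \<in> unit_of (chain n)" using x by blast
    have ux: "unit_of x = unit_of (chain n)" using unit_of_member[OF chain_in_V n] .
    show "y \<in> ?M"
    proof (cases "y \<in> unit_of (chain n)")
      case False
      hence x_end: "is_end x" using x xy ux by (auto simp: is_end_def)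
      hence "x = chain n \<or> x = opposite (chain n)" using opposite(7)[OF is_end_chain] n by blast
      hence "y = opposite (chain (Suc n)) \<or> (\<exists>m. y = chain m)"
        using out_nbr(3)[OF x_end xy] False ux chain_out_nbr out_nbr_opposite_chain by metis
      thus ?thesis
        using adj_in_V2[OF xy] opposite(1)[OF is_end_chain] in_unit_of[OF chain_in_V] by blast
    qed (use adj_in_V2[OF xy] in blast)
  qed
  then obtain n where "v \<in> unit_of (chain n)" using assms by blast
  hence "v \<in> unit_of (chain (n mod period))" using chain_mod_period by metis
  thus ?thesis using that period_pos by (meson mod_less_divisor)
qed

lemma period_ge_2: "2 \<le> period"
proof (rule ccontr)
  assume "\<not> 2 \<le> period"
  hence "period = 1" using period_pos by simp
  obtain i where "i < period" "out_nbr e0 \<in> unit_of (chain i)"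
    using unit_of_chain_cover adj_in_V2[OF out_nbr(1)[OF end_e0]] by blast
  hence "out_nbr e0 \<in> unit_of e0" using \<open>period = 1\<close> by (simp add: chain_0)
  thus False using out_nbr(2)[OF end_e0] by simp
qed

text \<open>Vertex \<open>(i,j)\<close> of \<open>N_period\<close> goes to \<open>a_i, b_i, c_i, d_i\<close> for \<open>j = 0,1,2,3\<close>, where
  \<open>a_i\<close> is the \<open>i\<close>-th end of the walk and \<open>b_i\<close> its opposite end.\<close>

definition necklace_map :: "nat \<times> nat \<Rightarrow> 'a" where
  "necklace_map p = (case p of (i,j) \<Rightarrow>
     if j = 0 then chain i else if j = 1 then opposite (chain i)
     else if j = 2 then centre1 (chain i) else centre2 (chain i))"

lemma necklace_map_in_unit: "j < 4 \<Longrightarrow> necklace_map (i,j) \<in> unit_of (chain i)"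
  using centres(1)[OF is_end_chain[of i]] less_4_cases[of j] by (auto simp: necklace_map_def)

lemma index_eq_if_same_unit:
  assumes "i < period" "i' < period" "y \<in> unit_of (chain i)" "y \<in> unit_of (chain i')"
  shows "i = i'"
  using units_eq[OF unit_of_in_units[OF chain_in_V] unit_of_in_units[OF chain_in_V] assms(3,4)]
    unit_of_chain_inj assms(1,2) by blast

lemma bij_necklace_map: "bij_betw necklace_map (necklace_V period) V"
  unfolding bij_betw_def
proof
  show "inj_on necklace_map (necklace_V period)"
  proof (rule inj_onI)
    fix x y assume x: "x \<in> necklace_V period" and y: "y \<in> necklace_V period"
      and eq: "necklace_map x = necklace_map y"
    obtain i j where ij: "x = (i,j)" "i < period" "j < 4" using x by (auto simp: necklace_V_def)
    obtain i' j' where ij': "y = (i',j')" "i' < period" "j' < 4" using y by (auto simp: necklace_V_def)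
    have "i = i'"
      using index_eq_if_same_unit[OF ij(2) ij'(2) necklace_map_in_unit[OF ij(3)]]
        necklace_map_in_unit[OF ij'(3)] eq ij ij' by simp
    moreover have "distinct [chain i, opposite (chain i), centre1 (chain i), centre2 (chain i)]"
      using centres(2)[OF is_end_chain] .
    ultimately have "j = j'"
      using eq ij ij' less_4_cases[OF ij(3)] less_4_cases[OF ij'(3)] by (auto simp: necklace_map_def)
    thus "x = y" using \<open>i = i'\<close> ij ij' by simp
  qed
  show "necklace_map ` necklace_V period = V"
  proof
    show "necklace_map ` necklace_V period \<subseteq> V"
      using necklace_map_in_unit unit_of_subset_V[OF chain_in_V] by (fastforce simp: necklace_V_def)
    show "V \<subseteq> necklace_map ` necklace_V period"
    proof
      fix v assume "v \<in> V"
      then obtain i where i: "i < period" "v \<in> unit_of (chain i)" by (rule unit_of_chain_cover)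
      hence "v = necklace_map (i,0) \<or> v = necklace_map (i,1) \<or> v = necklace_map (i,2) \<or> v = necklace_map (i,3)"
        using centres(1)[OF is_end_chain[of i]] by (auto simp: necklace_map_def)
      moreover have "(i,0) \<in> necklace_V period" "(i,1) \<in> necklace_V period"
        "(i,2) \<in> necklace_V period" "(i,3) \<in> necklace_V period"
        using i by (auto simp: necklace_V_def)
      ultimately show "v \<in> necklace_map ` necklace_V period" by blast
    qed
  qed
qed

lemma chain_out_nbr_mod: "out_nbr (chain i) = opposite (chain (Suc i mod period))"
  using chain_out_nbr chain_mod_period by metis

lemma chain_adj_opposite_iff:
  assumes "i < period" "i' < period"
  shows "E (chain i) (opposite (chain i')) \<longleftrightarrow> i' = Suc i mod period"
proof
  assume e: "E (chain i) (opposite (chain i'))"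
  have "opposite (chain i') \<notin> unit_of (chain i)"
  proof
    assume "opposite (chain i') \<in> unit_of (chain i)"
    hence "i = i'" using index_eq_if_same_unit assms opposite(1)[OF is_end_chain] by blast
    thus False using e opposite(3)[OF is_end_chain] by simp
  qed
  hence "opposite (chain i') = opposite (chain (Suc i mod period))"
    using out_nbr(3)[OF is_end_chain e] chain_out_nbr_mod by simp
  hence "chain i' = chain (Suc i mod period)" using opposite_inj is_end_chain by blast
  thus "i' = Suc i mod period" using chain_inj assms period_pos by simp
next
  assume "i' = Suc i mod period"
  thus "E (chain i) (opposite (chain i'))" using out_nbr(1)[OF is_end_chain[of i]] chain_out_nbr_mod by simp
qed

lemma chain_not_adj_chain:
  assumes "i < period" "i' < period"
  shows "\<not> E (chain i) (chain i')"
proof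
  assume e: "E (chain i) (chain i')"
  show False
  proof (cases "chain i' \<in> unit_of (chain i)")
    case True
    hence "i = i'" using index_eq_if_same_unit assms in_unit_of[OF chain_in_V] by blast
    thus False using e adj_irrefl by simp
  next
    case False
    hence "chain i' = opposite (chain (Suc i mod period))"
      using out_nbr(3)[OF is_end_chain e] chain_out_nbr_mod by simp
    thus False using chain_neq_opposite by blast
  qed
qed

lemma opposite_not_adj_opposite:
  assumes "i < period" "i' < period"
  shows "\<not> E (opposite (chain i)) (opposite (chain i'))"
proof
  assume e: "E (opposite (chain i)) (opposite (chain i'))"
  show False
  proof (cases "opposite (chain i') \<in> unit_of (chain i)")
    case True
    hence "i = i'" using index_eq_if_same_unit assms opposite(1)[OF is_end_chain] by blast
    thus False using e adj_irrefl by simp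
  next
    case False
    hence "opposite (chain i') = out_nbr (opposite (chain i))"
      using out_nbr(3)[OF opposite(4)[OF is_end_chain] e] opposite(5)[OF is_end_chain] by simp
    thus False using out_nbr_opposite_chain chain_neq_opposite by metis
  qed
qed

lemma centre_nbrs_in_unit:
  assumes "2 \<le> j" "j < 4" "E (necklace_map (i,j)) y"
  shows "y \<in> unit_of (chain i)"
proof -
  have "j = 2 \<or> j = 3" using assms by auto
  hence "nbrs E (necklace_map (i,j)) \<subseteq> unit_of (chain i)"
    using centres(8,9)[OF is_end_chain[of i]] by (auto simp: necklace_map_def)
  thus ?thesis using assms(3) by (auto simp: nbrs_def)
qed

lemma necklace_map_adj_same_index:
  assumes "i < period" "j < 4" "j' < 4"
  shows "necklace_E period (i,j) (i,j') \<longleftrightarrow> E (necklace_map (i,j)) (necklace_map (i,j'))"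
proof -
  have "Suc i mod period \<noteq> i" using Suc_mod_neq period_ge_2 assms(1) by blast
  moreover have "(i,j) \<in> necklace_V period" "(i,j') \<in> necklace_V period"
    using assms by (auto simp: necklace_V_def)
  ultimately have N: "necklace_E period (i,j) (i,j') \<longleftrightarrow> j \<noteq> j' \<and> {j,j'} \<noteq> {0,1}"
    by (simp add: necklace_E_def eq_commute[of i])
  let ?a = "chain i" and ?b = "opposite (chain i)" and ?c = "centre1 (chain i)" and ?d = "centre2 (chain i)"
  have D: "distinct [?a, ?b, ?c, ?d]" "E ?a ?c" "E ?a ?d" "E ?b ?c" "E ?b ?d" "E ?c ?d" "\<not> E ?a ?b"
    using centres(2-7)[OF is_end_chain[of i]] opposite(3)[OF is_end_chain[of i]] by auto
  have S: "E ?c ?a" "E ?d ?a" "E ?c ?b" "E ?d ?b" "E ?d ?c" "\<not> E ?b ?a" using D adj_sym by blast+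
  have M: "necklace_map (i,0) = ?a" "necklace_map (i,1) = ?b" "necklace_map (i,2) = ?c"
    "necklace_map (i,3) = ?d" by (auto simp: necklace_map_def)
  show ?thesis unfolding N
    using less_4_cases[OF assms(2)] less_4_cases[OF assms(3)] M D S adj_irrefl
    by (elim disjE) (simp_all add: doubleton_eq_iff)
qed

lemma necklace_map_adj_other_index:
  assumes i: "i < period" "i' < period" "i \<noteq> i'" and j: "j < 4" "j' < 4"
  shows "necklace_E period (i,j) (i',j') \<longleftrightarrow> E (necklace_map (i,j)) (necklace_map (i',j'))"
proof -
  have N: "necklace_E period (i,j) (i',j') \<longleftrightarrow>
      (j = 0 \<and> j' = 1 \<and> i' = Suc i mod period) \<or> (j' = 0 \<and> j = 1 \<and> i = Suc i' mod period)"
    using i j by (auto simp: necklace_E_def necklace_V_def)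
  have c1: "\<not> E (necklace_map (i,j)) (necklace_map (i',j'))" if "2 \<le> j"
    using centre_nbrs_in_unit[OF that j(1)] index_eq_if_same_unit[OF i(1,2) _ necklace_map_in_unit[OF j(2)]]
      i(3) by blast
  have c2: "\<not> E (necklace_map (i,j)) (necklace_map (i',j'))" if "2 \<le> j'"
    using centre_nbrs_in_unit[OF that j(2)] index_eq_if_same_unit[OF i(2,1) _ necklace_map_in_unit[OF j(1)]]
      i(3) adj_sym by blast
  have M: "necklace_map (i,0) = chain i" "necklace_map (i,1) = opposite (chain i)"
    "necklace_map (i',0) = chain i'" "necklace_map (i',1) = opposite (chain i')"
    by (auto simp: necklace_map_def)
  have "E (opposite (chain i)) (chain i') \<longleftrightarrow> i = Suc i' mod period"
    using chain_adj_opposite_iff[OF i(2,1)] adj_sym by blast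
  thus ?thesis unfolding N
    using less_4_cases[OF j(1)] less_4_cases[OF j(2)] M chain_adj_opposite_iff[OF i(1,2)]
      chain_not_adj_chain[OF i(1,2)] opposite_not_adj_opposite[OF i(1,2)] c1 c2
    by (elim disjE) simp_all
qed

lemma graph_iso_necklace: "graph_iso V E (necklace_V period) (necklace_E period)"
proof -
  define f where "f = inv_into (necklace_V period) necklace_map"
  have f: "bij_betw f V (necklace_V period)"
    using bij_betw_inv_into[OF bij_necklace_map] f_def by simp
  have map_f: "necklace_map (f x) = x" if "x \<in> V" for x
    using bij_necklace_map that f_def by (simp add: bij_betw_inv_into_right)
  have "E x y \<longleftrightarrow> necklace_E period (f x) (f y)" if xy: "x \<in> V" "y \<in> V" for x y
  proof -
    obtain i j where ij: "f x = (i,j)" "i < period" "j < 4"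
      using bij_betwE[OF f] xy(1) by (fastforce simp: necklace_V_def)
    obtain i' j' where ij': "f y = (i',j')" "i' < period" "j' < 4"
      using bij_betwE[OF f] xy(2) by (fastforce simp: necklace_V_def)
    have "E x y \<longleftrightarrow> E (necklace_map (i,j)) (necklace_map (i',j'))"
      using map_f[OF xy(1)] map_f[OF xy(2)] ij ij' by simp
    thus ?thesis using ij ij' necklace_map_adj_same_index necklace_map_adj_other_index
      by (cases "i = i'") auto
  qed
  thus ?thesis using f unfolding graph_iso_def by blast
qed

end

context claw_free_cubic_graph
begin

lemma sigma_all_diamonds:
  assumes "\<forall>U\<in>units. is_diamond E U"
  shows "sigma V E 2 3 = card units + 1"
  using all_diamonds_spreading_set_upper_bound[OF assms]
    sigma_eqI all_diamonds_spreading_set_lower_bound[OF assms] by metis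

lemma sigma_not_all_diamonds:
  assumes "\<not> (\<forall>U\<in>units. is_diamond E U)"
  shows "sigma V E 2 3 = card units"
  using not_all_diamonds_spreading_set_upper_bound[OF assms]
    sigma_eqI card_units_le_spreading_set by metis

lemma necklace_iff_all_diamonds:
  "(\<exists>k\<ge>2. graph_iso V E (necklace_V k) (necklace_E k)) \<longleftrightarrow> (\<forall>U\<in>units. is_diamond E U)"
proof
  assume "\<exists>k\<ge>2. graph_iso V E (necklace_V k) (necklace_E k)"
  thus "\<forall>U\<in>units. is_diamond E U" using necklace_all_diamonds by blast
next
  assume diamonds: "\<forall>U\<in>units. is_diamond E U"
  obtain v where v: "v \<in> V" using V_nonempty by blast
  obtain e e' where e: "e \<in> unit_of v" "E e e'" "e' \<notin> unit_of v"
    using diamond_unit_end unit_of_in_units[OF v] diamonds by metis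
  hence "is_end e" using unit_of_member[OF v e(1)] adj_in_V1 by (auto simp: is_end_def)
  then interpret diamond_chain V E e using diamonds by unfold_locales
  show "\<exists>k\<ge>2. graph_iso V E (necklace_V k) (necklace_E k)" using graph_iso_necklace period_ge_2 by blast
qed

end

theorem corollary4p5:
  fixes V :: "'a set" and E :: "'a \<Rightarrow> 'a \<Rightarrow> bool"
  assumes "simple_graph V E" and "connected_graph V E" and "claw_free V E" and "cubic V E"
    and "\<not> graph_iso V E K4_V K4_E"
  shows "((\<exists>k\<ge>2. graph_iso V E (necklace_V k) (necklace_E k)) \<longrightarrow> sigma V E 2 3 = num_units V E + 1)
       \<and> ((\<not> (\<exists>k\<ge>2. graph_iso V E (necklace_V k) (necklace_E k))) \<longrightarrow> sigma V E 2 3 = num_units V E)"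
proof -
  interpret claw_free_cubic_graph V E
    using assms by unfold_locales
  show ?thesis
    using necklace_iff_all_diamonds sigma_all_diamonds sigma_not_all_diamonds num_units_eq_card by simp
qed

end
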